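(* Let $A$ be a $k$-algebra and let $\psi:P_\bullet\to P'_\bullet$ be an injective chain map of $A$-bimodule resolutions of $A$ lifting the identity map on $A$. If $P'_n/\operatorname{Im}\psi_n$ is projective as an $A$-bimodule for each $n$, then there exists a chain map $\psi':P'_\bullet\to P_\bullet$ (lifting the identity on $A$) with $\psi'\psi=1_P$. If $A$ is a graded algebra with $P_\bullet,P'_\bullet$ graded resolutions and $\psi$ a graded map, then $\psi'$ can be chosen to be graded.
   Context: A bimodule resolution of $A$ is a complex $P_\bullet$ ($n\ge0$) of $A$-bimodules with bimodule differentials and an augmentation $P_0\to A$ such that the augmented complex is exact. A chain map lifting the identity on $A$ is a chain map of bimodule complexes commuting with the augmentations. *)

theory Defs
  imports Main
begin

text \<open>A bimodule is given by an explicit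
  carrier set with its operations (so that different bimodules may share a type).\<close>

definition k_algebra :: "('k::field \<Rightarrow> 'a::ring_1) \<Rightarrow> bool" where
  "k_algebra alg \<longleftrightarrow> alg 1 = 1 \<and> (\<forall>x y. alg (x + y) = alg x + alg y)
     \<and> (\<forall>x y. alg (x * y) = alg x * alg y) \<and> (\<forall>c a. alg c * a = a * alg c)"

record ('a, 'm) bimod =
  bcar :: "'m set"
  bzero :: 'm
  badd :: "'m \<Rightarrow> 'm \<Rightarrow> 'm"
  bneg :: "'m \<Rightarrow> 'm"
  blact :: "'a \<Rightarrow> 'm \<Rightarrow> 'm"
  bract :: "'m \<Rightarrow> 'a \<Rightarrow> 'm"

definition bimodule :: "('k::field \<Rightarrow> 'a::ring_1) \<Rightarrow> ('a, 'm) bimod \<Rightarrow> bool" where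
  "bimodule alg M \<longleftrightarrow>
     bzero M \<in> bcar M
   \<and> (\<forall>x\<in>bcar M. \<forall>y\<in>bcar M. badd M x y \<in> bcar M)
   \<and> (\<forall>x\<in>bcar M. bneg M x \<in> bcar M)
   \<and> (\<forall>a. \<forall>x\<in>bcar M. blact M a x \<in> bcar M)
   \<and> (\<forall>a. \<forall>x\<in>bcar M. bract M x a \<in> bcar M)
   \<and> (\<forall>x\<in>bcar M. \<forall>y\<in>bcar M. \<forall>z\<in>bcar M. badd M (badd M x y) z = badd M x (badd M y z))
   \<and> (\<forall>x\<in>bcar M. \<forall>y\<in>bcar M. badd M x y = badd M y x)
   \<and> (\<forall>x\<in>bcar M. badd M (bzero M) x = x)
   \<and> (\<forall>x\<in>bcar M. badd M (bneg M x) x = bzero M)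
   \<and> (\<forall>x\<in>bcar M. blact M 1 x = x)
   \<and> (\<forall>a b. \<forall>x\<in>bcar M. blact M (a * b) x = blact M a (blact M b x))
   \<and> (\<forall>a b. \<forall>x\<in>bcar M. blact M (a + b) x = badd M (blact M a x) (blact M b x))
   \<and> (\<forall>a. \<forall>x\<in>bcar M. \<forall>y\<in>bcar M. blact M a (badd M x y) = badd M (blact M a x) (blact M a y))
   \<and> (\<forall>x\<in>bcar M. bract M x 1 = x)
   \<and> (\<forall>a b. \<forall>x\<in>bcar M. bract M x (a * b) = bract M (bract M x a) b)
   \<and> (\<forall>a b. \<forall>x\<in>bcar M. bract M x (a + b) = badd M (bract M x a) (bract M x b))
   \<and> (\<forall>a. \<forall>x\<in>bcar M. \<forall>y\<in>bcar M. bract M (badd M x y) a = badd M (bract M x a) (bract M y a))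
   \<and> (\<forall>a b. \<forall>x\<in>bcar M. bract M (blact M a x) b = blact M a (bract M x b))
   \<and> (\<forall>c. \<forall>x\<in>bcar M. blact M (alg c) x = bract M x (alg c))"

definition bimod_hom :: "('a, 'm) bimod \<Rightarrow> ('a, 'n) bimod \<Rightarrow> ('m \<Rightarrow> 'n) \<Rightarrow> bool" where
  "bimod_hom M N f \<longleftrightarrow>
     (\<forall>x\<in>bcar M. f x \<in> bcar N)
   \<and> (\<forall>x\<in>bcar M. \<forall>y\<in>bcar M. f (badd M x y) = badd N (f x) (f y))
   \<and> (\<forall>a. \<forall>x\<in>bcar M. f (blact M a x) = blact N a (f x))
   \<and> (\<forall>a. \<forall>x\<in>bcar M. f (bract M x a) = bract N (f x) a)"

definition reg_bimod :: "('a::ring_1, 'a) bimod" where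
  "reg_bimod = \<lparr>bcar = UNIV, bzero = 0, badd = (+), bneg = uminus,
                blact = (*), bract = (*)\<rparr>"

definition coset :: "('a, 'm) bimod \<Rightarrow> 'm set \<Rightarrow> 'm \<Rightarrow> 'm set" where
  "coset N S x = {badd N x y | y. y \<in> S}"

definition quot_bimod :: "('a, 'm) bimod \<Rightarrow> 'm set \<Rightarrow> ('a, 'm set) bimod" where
  "quot_bimod N S =
    \<lparr>bcar = coset N S ` bcar N,
     bzero = S,
     badd = (\<lambda>X Y. coset N S (badd N (SOME x. x \<in> X) (SOME y. y \<in> Y))),
     bneg = (\<lambda>X. coset N S (bneg N (SOME x. x \<in> X))),
     blact = (\<lambda>a X. coset N S (blact N a (SOME x. x \<in> X))),
     bract = (\<lambda>X a. coset N S (bract N (SOME x. x \<in> X) a))\<rparr>"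

text \<open>M is projective iff every surjective bimodule map onto M splits.  It suffices
  to test surjections from bimodules whose carrier type is large enough to contain a
  copy of the free bimodule A (x)_k k[M] (x)_k A on the carrier of M; every element of
  the latter is a finite sum of elementary tensors a (x) m (x) b, so it is a quotient of
  lists of triples and embeds into sets of such lists.  Hence this definition is
  equivalent to the usual notion of a projective A-bimodule (A (x)_k A^op-module).\<close>
definition projective_bimod :: "('k::field \<Rightarrow> 'a::ring_1) \<Rightarrow> ('a, 'm) bimod \<Rightarrow> bool" where
  "projective_bimod alg M \<longleftrightarrow> bimodule alg M \<and>
     (\<forall>(N :: ('a, ('a \<times> 'm \<times> 'a) list set) bimod) g.
        bimodule alg N \<and> bimod_hom N M g \<and> g ` bcar N = bcar M \<longrightarrow>
        (\<exists>s. bimod_hom M N s \<and> (\<forall>x\<in>bcar M. g (s x) = x)))"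

text \<open>P n is the n-th term, d n : P (n+1) -> P n the differential, eps : P 0 -> A the
  augmentation; the augmented complex ... -> P 1 -> P 0 -> A -> 0 is exact.\<close>
definition bimod_resolution ::
  "('k::field \<Rightarrow> 'a::ring_1) \<Rightarrow> (nat \<Rightarrow> ('a, 'm) bimod) \<Rightarrow> (nat \<Rightarrow> 'm \<Rightarrow> 'm) \<Rightarrow> ('m \<Rightarrow> 'a) \<Rightarrow> bool" where
  "bimod_resolution alg P d eps \<longleftrightarrow>
     (\<forall>n. bimodule alg (P n))
   \<and> (\<forall>n. bimod_hom (P (Suc n)) (P n) (d n))
   \<and> bimod_hom (P 0) reg_bimod eps
   \<and> eps ` bcar (P 0) = UNIV
   \<and> {x \<in> bcar (P 0). eps x = 0} = d 0 ` bcar (P 1)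
   \<and> (\<forall>n. {x \<in> bcar (P (Suc n)). d n x = bzero (P n)} = d (Suc n) ` bcar (P (Suc (Suc n))))"

definition chain_map_lifting_id ::
  "(nat \<Rightarrow> ('a, 'm) bimod) \<Rightarrow> (nat \<Rightarrow> 'm \<Rightarrow> 'm) \<Rightarrow> ('m \<Rightarrow> 'a)
   \<Rightarrow> (nat \<Rightarrow> ('a, 'n) bimod) \<Rightarrow> (nat \<Rightarrow> 'n \<Rightarrow> 'n) \<Rightarrow> ('n \<Rightarrow> 'a)
   \<Rightarrow> (nat \<Rightarrow> 'm \<Rightarrow> 'n) \<Rightarrow> bool" where
  "chain_map_lifting_id P d eps P' d' eps' f \<longleftrightarrow>
     (\<forall>n. bimod_hom (P n) (P' n) (f n))
   \<and> (\<forall>n. \<forall>x\<in>bcar (P (Suc n)). d' n (f (Suc n) x) = f n (d n x))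
   \<and> (\<forall>x\<in>bcar (P 0). eps' (f 0 x) = eps x)"

definition graded_algebra :: "('k::field \<Rightarrow> 'a::ring_1) \<Rightarrow> (nat \<Rightarrow> 'a set) \<Rightarrow> bool" where
  "graded_algebra alg Ag \<longleftrightarrow>
     (\<forall>i. 0 \<in> Ag i \<and> (\<forall>a\<in>Ag i. \<forall>b\<in>Ag i. a + b \<in> Ag i) \<and> (\<forall>a\<in>Ag i. - a \<in> Ag i)
          \<and> (\<forall>c. \<forall>a\<in>Ag i. alg c * a \<in> Ag i))
   \<and> (\<forall>i j. \<forall>a\<in>Ag i. \<forall>b\<in>Ag j. a * b \<in> Ag (i + j))
   \<and> (\<forall>a. \<exists>N f. (\<forall>i. f i \<in> Ag i) \<and> a = (\<Sum>i<N. f i))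
   \<and> (\<forall>N f. (\<forall>i. f i \<in> Ag i) \<and> (\<Sum>i<N. f i) = 0 \<longrightarrow> (\<forall>i<N. f i = 0))"

definition int_grading :: "(nat \<Rightarrow> 'a::zero set) \<Rightarrow> int \<Rightarrow> 'a set" where
  "int_grading Ag j = (if 0 \<le> j then Ag (nat j) else {0})"

definition lsum :: "('a, 'm) bimod \<Rightarrow> 'm list \<Rightarrow> 'm" where
  "lsum M xs = foldr (badd M) xs (bzero M)"

definition graded_bimod ::
  "(nat \<Rightarrow> 'a::ring_1 set) \<Rightarrow> ('a, 'm) bimod \<Rightarrow> (int \<Rightarrow> 'm set) \<Rightarrow> bool" where
  "graded_bimod Ag M Mg \<longleftrightarrow>
     (\<forall>j. Mg j \<subseteq> bcar M \<and> bzero M \<in> Mg j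
          \<and> (\<forall>x\<in>Mg j. \<forall>y\<in>Mg j. badd M x y \<in> Mg j) \<and> (\<forall>x\<in>Mg j. bneg M x \<in> Mg j))
   \<and> (\<forall>i j. \<forall>a\<in>Ag i. \<forall>x\<in>Mg j. blact M a x \<in> Mg (int i + j) \<and> bract M x a \<in> Mg (j + int i))
   \<and> (\<forall>x\<in>bcar M. \<exists>N f. (\<forall>j. f j \<in> Mg j) \<and> x = lsum M (map f [-N..N]))
   \<and> (\<forall>N f. (\<forall>j. f j \<in> Mg j) \<and> lsum M (map f [-N..N]) = bzero M
          \<longrightarrow> (\<forall>j\<in>{-N..N}. f j = bzero M))"

definition graded_map :: "(int \<Rightarrow> 'm set) \<Rightarrow> (int \<Rightarrow> 'n set) \<Rightarrow> ('m \<Rightarrow> 'n) \<Rightarrow> bool" where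
  "graded_map Mg Ng f \<longleftrightarrow> (\<forall>j. f ` Mg j \<subseteq> Ng j)"

definition graded_resolution ::
  "(nat \<Rightarrow> 'a::ring_1 set) \<Rightarrow> (nat \<Rightarrow> ('a, 'm) bimod) \<Rightarrow> (nat \<Rightarrow> 'm \<Rightarrow> 'm) \<Rightarrow> ('m \<Rightarrow> 'a)
   \<Rightarrow> (nat \<Rightarrow> int \<Rightarrow> 'm set) \<Rightarrow> bool" where
  "graded_resolution Ag P d eps Pg \<longleftrightarrow>
     (\<forall>n. graded_bimod Ag (P n) (Pg n))
   \<and> (\<forall>n. graded_map (Pg (Suc n)) (Pg n) (d n))
   \<and> graded_map (Pg 0) (int_grading Ag) eps"

end

(*
  Projectivity of P'_n / psi_n(P_n) gives, for maps D : P_n -> T and h : P'_n -> T with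
  h psi_n = D and h(P'_n) contained in D(P_n), a retraction f of psi_n with D f = h.
  Applying this to D = eps, h = eps' gives psi'_0, and applying it to D = d_n, h = psi'_n d'_n
  gives psi'_(n+1); exactness of P turns the chain map condition of psi'_n into the image
  condition needed for the next degree.

  In the graded case psi'_n is replaced by its degree-zero part x |-> sum_j (psi'_n x_j)_j.
  It is again a bimodule map, as homogeneous scalars, which span A, shift all components by
  the same degree; it commutes with the graded maps d, d', eps, eps' and psi; and it leaves
  graded maps, in particular the identity, unchanged.
*)
theory Submission
  imports Defs "HOL-Algebra.FiniteProduct" "HOL-Library.Infinite_Set"
begin


context
  fixes alg :: "'k::field \<Rightarrow> 'a::ring_1" and M :: "('a, 'm) bimod"
  assumes bm: "bimodule alg M"
begin

lemma bm_zero[simp]: "bzero M \<in> bcar M"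
  using bm unfolding bimodule_def by (elim conjE) simp
lemma bm_add[simp]: "x \<in> bcar M \<Longrightarrow> y \<in> bcar M \<Longrightarrow> badd M x y \<in> bcar M"
  using bm unfolding bimodule_def by (elim conjE) simp
lemma bm_neg[simp]: "x \<in> bcar M \<Longrightarrow> bneg M x \<in> bcar M"
  using bm unfolding bimodule_def by (elim conjE) simp
lemma bm_lact[simp]: "x \<in> bcar M \<Longrightarrow> blact M a x \<in> bcar M"
  using bm unfolding bimodule_def by (elim conjE) simp
lemma bm_ract[simp]: "x \<in> bcar M \<Longrightarrow> bract M x a \<in> bcar M"
  using bm unfolding bimodule_def by (elim conjE) simp
lemma bm_assoc:
  "x \<in> bcar M \<Longrightarrow> y \<in> bcar M \<Longrightarrow> z \<in> bcar M \<Longrightarrow> badd M (badd M x y) z = badd M x (badd M y z)"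
  using bm unfolding bimodule_def by (elim conjE) simp
lemma bm_comm: "x \<in> bcar M \<Longrightarrow> y \<in> bcar M \<Longrightarrow> badd M x y = badd M y x"
  using bm unfolding bimodule_def by (elim conjE) simp
lemma bm_zero_l[simp]: "x \<in> bcar M \<Longrightarrow> badd M (bzero M) x = x"
  using bm unfolding bimodule_def by (elim conjE) simp
lemma bm_neg_l[simp]: "x \<in> bcar M \<Longrightarrow> badd M (bneg M x) x = bzero M"
  using bm unfolding bimodule_def by (elim conjE) simp
lemma bm_lact_one[simp]: "x \<in> bcar M \<Longrightarrow> blact M 1 x = x"
  using bm unfolding bimodule_def by (elim conjE) simp
lemma bm_lact_mult: "x \<in> bcar M \<Longrightarrow> blact M (a * b) x = blact M a (blact M b x)"
  using bm unfolding bimodule_def by (elim conjE) simp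
lemma bm_lact_addr: "x \<in> bcar M \<Longrightarrow> blact M (a + b) x = badd M (blact M a x) (blact M b x)"
  using bm unfolding bimodule_def by (elim conjE) simp
lemma bm_lact_add:
  "x \<in> bcar M \<Longrightarrow> y \<in> bcar M \<Longrightarrow> blact M a (badd M x y) = badd M (blact M a x) (blact M a y)"
  using bm unfolding bimodule_def by (elim conjE) simp
lemma bm_ract_one[simp]: "x \<in> bcar M \<Longrightarrow> bract M x 1 = x"
  using bm unfolding bimodule_def by (elim conjE) simp
lemma bm_ract_mult: "x \<in> bcar M \<Longrightarrow> bract M x (a * b) = bract M (bract M x a) b"
  using bm unfolding bimodule_def by (elim conjE) simp
lemma bm_ract_addr: "x \<in> bcar M \<Longrightarrow> bract M x (a + b) = badd M (bract M x a) (bract M x b)"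
  using bm unfolding bimodule_def by (elim conjE) simp
lemma bm_ract_add:
  "x \<in> bcar M \<Longrightarrow> y \<in> bcar M \<Longrightarrow> bract M (badd M x y) a = badd M (bract M x a) (bract M y a)"
  using bm unfolding bimodule_def by (elim conjE) simp
lemma bm_lr: "x \<in> bcar M \<Longrightarrow> bract M (blact M a x) b = blact M a (bract M x b)"
  using bm unfolding bimodule_def by (elim conjE) simp
lemma bm_alg: "x \<in> bcar M \<Longrightarrow> blact M (alg c) x = bract M x (alg c)"
  using bm unfolding bimodule_def by (elim conjE) simp

lemma bm_zero_r[simp]: "x \<in> bcar M \<Longrightarrow> badd M x (bzero M) = x"
  using bm_comm[of x "bzero M"] by simp
lemma bm_neg_r[simp]: "x \<in> bcar M \<Longrightarrow> badd M x (bneg M x) = bzero M"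
  using bm_comm[of x "bneg M x"] by simp
lemma bm_lcomm:
  "x \<in> bcar M \<Longrightarrow> y \<in> bcar M \<Longrightarrow> z \<in> bcar M \<Longrightarrow> badd M x (badd M y z) = badd M y (badd M x z)"
  by (metis bm_assoc bm_comm)
lemma bm_add4:
  "a \<in> bcar M \<Longrightarrow> b \<in> bcar M \<Longrightarrow> c \<in> bcar M \<Longrightarrow> d \<in> bcar M \<Longrightarrow>
   badd M (badd M a b) (badd M c d) = badd M (badd M a c) (badd M b d)"
  by (simp add: bm_assoc) (metis bm_lcomm bm_add)
lemma bm_add_neg_cancel[simp]:
  "x \<in> bcar M \<Longrightarrow> y \<in> bcar M \<Longrightarrow> badd M x (badd M (bneg M x) y) = y"
  using bm_assoc[of x "bneg M x" y] by simp
lemma bm_neg_add_cancel[simp]: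
  "x \<in> bcar M \<Longrightarrow> y \<in> bcar M \<Longrightarrow> badd M (bneg M x) (badd M x y) = y"
  using bm_assoc[of "bneg M x" x y] by simp

lemma bm_cancel:
  assumes "x \<in> bcar M" "y \<in> bcar M" "z \<in> bcar M" "badd M x y = badd M x z"
  shows "y = z"
  using assms bm_neg_add_cancel by metis

lemma bm_neg_unique: "x \<in> bcar M \<Longrightarrow> y \<in> bcar M \<Longrightarrow> badd M x y = bzero M \<Longrightarrow> y = bneg M x"
  using bm_cancel[of x y "bneg M x"] by simp
lemma bm_idem_zero: "x \<in> bcar M \<Longrightarrow> badd M x x = x \<Longrightarrow> x = bzero M"
  using bm_cancel[of x x "bzero M"] by simp
lemma bm_neg_neg[simp]: "x \<in> bcar M \<Longrightarrow> bneg M (bneg M x) = x"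
  using bm_neg_unique[of "bneg M x" x] by simp
lemma bm_neg_zero[simp]: "bneg M (bzero M) = bzero M"
  using bm_neg_unique[of "bzero M" "bzero M"] by simp
lemma bm_eq_iff_diff_zero:
  "x \<in> bcar M \<Longrightarrow> y \<in> bcar M \<Longrightarrow> badd M x (bneg M y) = bzero M \<longleftrightarrow> x = y"
  by (metis bm_neg_unique bm_neg_neg bm_neg bm_neg_r)

lemma bm_neg_add:
  assumes "x \<in> bcar M" "y \<in> bcar M"
  shows "bneg M (badd M x y) = badd M (bneg M x) (bneg M y)"
proof -
  have "badd M (badd M x y) (badd M (bneg M x) (bneg M y))
      = badd M (badd M x (bneg M x)) (badd M y (bneg M y))"
    using assms bm_add4[of x y "bneg M x" "bneg M y"] by simp
  also have "\<dots> = bzero M" using assms by simp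
  finally show ?thesis
    using assms bm_neg_unique[of "badd M x y" "badd M (bneg M x) (bneg M y)"] by simp
qed

lemma bm_lact_zero[simp]: "blact M a (bzero M) = bzero M"
  using bm_idem_zero[of "blact M a (bzero M)"] bm_lact_add[of "bzero M" "bzero M" a] by simp
lemma bm_ract_zero[simp]: "bract M (bzero M) a = bzero M"
  using bm_idem_zero[of "bract M (bzero M) a"] bm_ract_add[of "bzero M" "bzero M" a] by simp
lemma bm_lact_0[simp]: "x \<in> bcar M \<Longrightarrow> blact M 0 x = bzero M"
  using bm_idem_zero[of "blact M 0 x"] bm_lact_addr[of x 0 0] by simp
lemma bm_ract_0[simp]: "x \<in> bcar M \<Longrightarrow> bract M x 0 = bzero M"
  using bm_idem_zero[of "bract M x 0"] bm_ract_addr[of x 0 0] by simp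
lemma bm_lact_neg: "x \<in> bcar M \<Longrightarrow> blact M a (bneg M x) = bneg M (blact M a x)"
  using bm_neg_unique[of "blact M a x" "blact M a (bneg M x)"] bm_lact_add[of x "bneg M x" a]
  by simp
lemma bm_ract_neg: "x \<in> bcar M \<Longrightarrow> bract M (bneg M x) a = bneg M (bract M x a)"
  using bm_neg_unique[of "bract M x a" "bract M (bneg M x) a"] bm_ract_add[of x "bneg M x" a]
  by simp
lemma bm_lact_uminus: "x \<in> bcar M \<Longrightarrow> blact M (- a) x = bneg M (blact M a x)"
  using bm_neg_unique[of "blact M a x" "blact M (-a) x"] bm_lact_addr[of x a "-a"] by simp

end

lemmas bm_simps = bm_zero bm_add bm_neg bm_lact bm_ract bm_zero_l bm_neg_l bm_lact_one bm_ract_one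
  bm_zero_r bm_neg_r bm_neg_neg bm_neg_zero bm_lact_zero bm_ract_zero bm_lact_0 bm_ract_0
  bm_add_neg_cancel bm_neg_add_cancel

lemmas bm_axioms = bm_assoc bm_lact_mult bm_lact_addr bm_lact_add bm_ract_mult bm_ract_addr
  bm_ract_add bm_lr bm_alg

lemma reg_bimodule: "k_algebra alg \<Longrightarrow> bimodule alg (reg_bimod :: ('a::ring_1, 'a) bimod)"
  unfolding bimodule_def reg_bimod_def k_algebra_def by (simp add: algebra_simps)

context
  fixes M :: "('a, 'm) bimod" and N :: "('a, 'n) bimod" and f :: "'m \<Rightarrow> 'n"
  assumes hom: "bimod_hom M N f"
begin

lemma hom_car[simp]: "x \<in> bcar M \<Longrightarrow> f x \<in> bcar N"
  using hom unfolding bimod_hom_def by blast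
lemma hom_add: "x \<in> bcar M \<Longrightarrow> y \<in> bcar M \<Longrightarrow> f (badd M x y) = badd N (f x) (f y)"
  using hom unfolding bimod_hom_def by blast
lemma hom_lact: "x \<in> bcar M \<Longrightarrow> f (blact M a x) = blact N a (f x)"
  using hom unfolding bimod_hom_def by blast
lemma hom_ract: "x \<in> bcar M \<Longrightarrow> f (bract M x a) = bract N (f x) a"
  using hom unfolding bimod_hom_def by blast

end

lemma hom_zero:
  assumes "bimodule alg M" "bimodule alg N" "bimod_hom M N f"
  shows "f (bzero M) = bzero N"
  using hom_add[OF assms(3), of "bzero M" "bzero M"] bm_idem_zero[OF assms(2), of "f (bzero M)"]
    assms by simp

lemma hom_neg:
  assumes "bimodule alg M" "bimodule alg N" "bimod_hom M N f" "x \<in> bcar M"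
  shows "f (bneg M x) = bneg N (f x)"
  using hom_add[OF assms(3), of x "bneg M x"] hom_zero[OF assms(1-3)]
    bm_neg_unique[OF assms(2), of "f x" "f (bneg M x)"] assms by simp

lemma hom_id: "bimod_hom M M (\<lambda>x. x)"
  unfolding bimod_hom_def by simp

lemma hom_comp: "bimod_hom M N f \<Longrightarrow> bimod_hom N K g \<Longrightarrow> bimod_hom M K (\<lambda>x. g (f x))"
  unfolding bimod_hom_def by auto

lemma hom_plus:
  assumes bm: "bimodule alg N" and f: "bimod_hom M N f" and g: "bimod_hom M N g"
  shows "bimod_hom M N (\<lambda>x. badd N (f x) (g x))"
  unfolding bimod_hom_def
  using bm by (simp add: hom_car[OF f] hom_add[OF f] hom_lact[OF f] hom_ract[OF f] hom_car[OF g]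
      hom_add[OF g] hom_lact[OF g] hom_ract[OF g] bm_lact_add bm_ract_add bm_add4)

lemma hom_uminus:
  assumes bm: "bimodule alg N" and f: "bimod_hom M N f"
  shows "bimod_hom M N (\<lambda>x. bneg N (f x))"
  unfolding bimod_hom_def
  using bm by (simp add: hom_car[OF f] hom_add[OF f] hom_lact[OF f] hom_ract[OF f] bm_neg_add
      bm_lact_neg bm_ract_neg)

lemma hom_inv_into:
  assumes bP: "bimodule alg P" and bK: "bimodule alg K"
    and psi: "bimod_hom P P' psi" and inj: "inj_on psi (bcar P)"
    and w: "bimod_hom K P' w" and sub: "w ` bcar K \<subseteq> psi ` bcar P"
  shows "bimod_hom K P (\<lambda>x. inv_into (bcar P) psi (w x))"
proof -
  have inv_in: "inv_into (bcar P) psi (w x) \<in> bcar P" if "x \<in> bcar K" for x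
    using sub that by (meson image_subset_iff inv_into_into)
  have psi_inv: "psi (inv_into (bcar P) psi (w x)) = w x" if "x \<in> bcar K" for x
    using sub that by (meson image_subset_iff f_inv_into_f)
  have inv_eq: "inv_into (bcar P) psi (w x) = p" if "x \<in> bcar K" "p \<in> bcar P" "psi p = w x" for x p
    using that inj by (metis inv_into_f_f)
  show ?thesis unfolding bimod_hom_def
  proof (intro conjI ballI allI)
    fix x a assume x: "x \<in> bcar K"
    note facts = x inv_in[OF x] psi_inv[OF x] bm_simps[OF bK] bm_simps[OF bP]
    show "inv_into (bcar P) psi (w x) \<in> bcar P" using inv_in[OF x] .
    show "inv_into (bcar P) psi (w (blact K a x)) = blact P a (inv_into (bcar P) psi (w x))"
      by (rule inv_eq) (use facts hom_lact[OF psi] hom_lact[OF w] in simp_all)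
    show "inv_into (bcar P) psi (w (bract K x a)) = bract P (inv_into (bcar P) psi (w x)) a"
      by (rule inv_eq) (use facts hom_ract[OF psi] hom_ract[OF w] in simp_all)
  next
    fix x y assume x: "x \<in> bcar K" and y: "y \<in> bcar K"
    show "inv_into (bcar P) psi (w (badd K x y))
        = badd P (inv_into (bcar P) psi (w x)) (inv_into (bcar P) psi (w y))"
      by (rule inv_eq) (use x y inv_in psi_inv hom_add[OF psi] hom_add[OF w] bm_simps[OF bK]
          bm_simps[OF bP] in simp_all)
  qed
qed


definition sub_bimod :: "('a, 'm) bimod \<Rightarrow> 'm set \<Rightarrow> bool" where
  "sub_bimod N S \<longleftrightarrow> S \<subseteq> bcar N \<and> bzero N \<in> S \<and> (\<forall>x\<in>S. \<forall>y\<in>S. badd N x y \<in> S)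
     \<and> (\<forall>x\<in>S. bneg N x \<in> S) \<and> (\<forall>a. \<forall>x\<in>S. blact N a x \<in> S) \<and> (\<forall>a. \<forall>x\<in>S. bract N x a \<in> S)"

lemma sub_bimodD:
  assumes "sub_bimod N S"
  shows "S \<subseteq> bcar N" "bzero N \<in> S" "x \<in> S \<Longrightarrow> y \<in> S \<Longrightarrow> badd N x y \<in> S"
    "x \<in> S \<Longrightarrow> bneg N x \<in> S" "x \<in> S \<Longrightarrow> blact N a x \<in> S" "x \<in> S \<Longrightarrow> bract N x a \<in> S"
  using assms unfolding sub_bimod_def by blast+

lemma sub_bimod_bimodule:
  assumes bm: "bimodule alg N" and S: "sub_bimod N S"
  shows "bimodule alg (N\<lparr>bcar := S\<rparr>)"
proof -
  have in_N: "x \<in> S \<Longrightarrow> x \<in> bcar N" for x using sub_bimodD(1)[OF S] by blast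
  show ?thesis unfolding bimodule_def bimod.simps
    apply (intro conjI ballI allI)
    using sub_bimodD(2-6)[OF S]
    apply (simp_all add: in_N bm_simps[OF bm] bm_axioms[OF bm])
    by (simp add: in_N bm_comm[OF bm])
qed

lemma hom_inclusion: "S \<subseteq> bcar N \<Longrightarrow> bimod_hom (N\<lparr>bcar := S\<rparr>) N (\<lambda>x. x)"
  unfolding bimod_hom_def by (simp add: subset_iff)

lemma sub_bimod_image:
  assumes bM: "bimodule alg M" and bN: "bimodule alg N" and f: "bimod_hom M N f"
  shows "sub_bimod N (f ` bcar M)"
  unfolding sub_bimod_def
proof (intro conjI ballI allI)
  show "f ` bcar M \<subseteq> bcar N" using f by auto
  show "bzero N \<in> f ` bcar M" using hom_zero[OF bM bN f] bm_zero[OF bM] by (metis image_eqI)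
  fix x y a assume "x \<in> f ` bcar M"
  then obtain x' where x': "x' \<in> bcar M" "x = f x'" by auto
  show "bneg N x \<in> f ` bcar M" using hom_neg[OF bM bN f x'(1)] x' bm_neg[OF bM] by (metis image_eqI)
  show "blact N a x \<in> f ` bcar M" using hom_lact[OF f x'(1)] x' bm_lact[OF bM] by (metis image_eqI)
  show "bract N x a \<in> f ` bcar M" using hom_ract[OF f x'(1)] x' bm_ract[OF bM] by (metis image_eqI)
  assume "y \<in> f ` bcar M"
  then obtain y' where y': "y' \<in> bcar M" "y = f y'" by auto
  show "badd N x y \<in> f ` bcar M"
    using hom_add[OF f x'(1) y'(1)] x' y' bm_add[OF bM] by (metis image_eqI)
qed

context
  fixes alg :: "'k::field \<Rightarrow> 'a::ring_1" and N :: "('a, 'm) bimod" and S :: "'m set"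
  assumes bm: "bimodule alg N" and S: "sub_bimod N S"
begin

lemma mem_coset:
  assumes x: "x \<in> bcar N"
  shows "z \<in> coset N S x \<longleftrightarrow> z \<in> bcar N \<and> badd N z (bneg N x) \<in> S"
proof
  assume "z \<in> coset N S x"
  then obtain s where s: "s \<in> S" "z = badd N x s" unfolding coset_def by auto
  have "s \<in> bcar N" using s(1) sub_bimodD(1)[OF S] by blast
  then show "z \<in> bcar N \<and> badd N z (bneg N x) \<in> S"
    using s x bm by (simp add: bm_comm[OF bm, of x s] bm_assoc)
next
  assume z: "z \<in> bcar N \<and> badd N z (bneg N x) \<in> S"
  have "z = badd N x (badd N z (bneg N x))" using z x bm by (simp add: bm_lcomm[OF bm, of x z])
  then show "z \<in> coset N S x" unfolding coset_def using z by blast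
qed

lemma coset_self: "x \<in> bcar N \<Longrightarrow> x \<in> coset N S x"
  using mem_coset sub_bimodD(2)[OF S] bm by simp

lemma coset_eq_iff:
  assumes x: "x \<in> bcar N" and y: "y \<in> bcar N"
  shows "coset N S x = coset N S y \<longleftrightarrow> badd N x (bneg N y) \<in> S"
proof
  assume "coset N S x = coset N S y"
  then show "badd N x (bneg N y) \<in> S" using coset_self[OF x] mem_coset[OF y] by blast
next
  have shift: "badd N (badd N z (bneg N u)) (badd N u (bneg N v)) = badd N z (bneg N v)"
    if "z \<in> bcar N" "u \<in> bcar N" "v \<in> bcar N" for z u v
    using that bm by (simp add: bm_assoc)
  have sub: "coset N S u \<subseteq> coset N S v" if u: "u \<in> bcar N" and v: "v \<in> bcar N"
    and uv: "badd N u (bneg N v) \<in> S" for u v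
  proof
    fix z assume "z \<in> coset N S u"
    then have z: "z \<in> bcar N" "badd N z (bneg N u) \<in> S" using mem_coset[OF u] by auto
    then show "z \<in> coset N S v"
      using mem_coset[OF v] sub_bimodD(3)[OF S z(2) uv] shift[OF z(1) u v] by simp
  qed
  assume d: "badd N x (bneg N y) \<in> S"
  moreover have "badd N y (bneg N x) \<in> S"
    using sub_bimodD(4)[OF S d] x y bm by (simp add: bm_neg_add bm_comm)
  ultimately show "coset N S x = coset N S y" using sub x y by blast
qed

lemma quot_rep:
  assumes x: "x \<in> bcar N"
  shows "(SOME z. z \<in> coset N S x) \<in> bcar N"
    and "badd N (SOME z. z \<in> coset N S x) (bneg N x) \<in> S"
  using someI[of "\<lambda>z. z \<in> coset N S x", OF coset_self[OF x]] mem_coset[OF x] by auto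

lemma quot_hom: "bimod_hom N (quot_bimod N S) (coset N S)"
  unfolding bimod_hom_def
proof (intro conjI ballI allI)
  fix x y a assume x: "x \<in> bcar N" and y: "y \<in> bcar N"
  define u where "u = (SOME z. z \<in> coset N S x)"
  define v where "v = (SOME z. z \<in> coset N S y)"
  note u = quot_rep[OF x, folded u_def] and v = quot_rep[OF y, folded v_def]
  have "badd N (badd N u v) (bneg N (badd N x y))
      = badd N (badd N u (bneg N x)) (badd N v (bneg N y))"
    using u v x y bm by (simp add: bm_neg_add bm_add4)
  then have "coset N S (badd N u v) = coset N S (badd N x y)"
    using coset_eq_iff u v x y bm sub_bimodD(3)[OF S u(2) v(2)] by simp
  then show "coset N S (badd N x y) = badd (quot_bimod N S) (coset N S x) (coset N S y)"
    unfolding quot_bimod_def u_def v_def by simp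
next
  fix x a assume x: "x \<in> bcar N"
  define u where "u = (SOME z. z \<in> coset N S x)"
  note u = quot_rep[OF x, folded u_def]
  have "badd N (blact N a u) (bneg N (blact N a x)) = blact N a (badd N u (bneg N x))"
    using u x bm by (simp add: bm_lact_add bm_lact_neg)
  then have "coset N S (blact N a u) = coset N S (blact N a x)"
    using coset_eq_iff u x bm sub_bimodD(5)[OF S u(2)] by simp
  then show "coset N S (blact N a x) = blact (quot_bimod N S) a (coset N S x)"
    unfolding quot_bimod_def u_def by simp
  have "badd N (bract N u a) (bneg N (bract N x a)) = bract N (badd N u (bneg N x)) a"
    using u x bm by (simp add: bm_ract_add bm_ract_neg)
  then have "coset N S (bract N u a) = coset N S (bract N x a)"
    using coset_eq_iff u x bm sub_bimodD(6)[OF S u(2)] by simp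
  then show "coset N S (bract N x a) = bract (quot_bimod N S) (coset N S x) a"
    unfolding quot_bimod_def u_def by simp
qed (simp add: quot_bimod_def)

lemma quot_zero_iff: "x \<in> bcar N \<Longrightarrow> coset N S x = bzero (quot_bimod N S) \<longleftrightarrow> x \<in> S"
proof -
  assume x: "x \<in> bcar N"
  have "coset N S (bzero N) = S"
    unfolding coset_def using sub_bimodD(1)[OF S] bm_zero_l[OF bm] by force
  then show ?thesis using coset_eq_iff[OF x bm_zero[OF bm]] x bm by (simp add: quot_bimod_def)
qed

end


section \<open>Projective bimodules\<close>

definition transport_bimod :: "('a, 'y) bimod \<Rightarrow> ('y \<Rightarrow> 'z) \<Rightarrow> ('z \<Rightarrow> 'y) \<Rightarrow> ('a, 'z) bimod" where
  "transport_bimod N e u =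
    \<lparr>bcar = e ` bcar N, bzero = e (bzero N), badd = (\<lambda>X Y. e (badd N (u X) (u Y))),
     bneg = (\<lambda>X. e (bneg N (u X))), blact = (\<lambda>a X. e (blact N a (u X))),
     bract = (\<lambda>X a. e (bract N (u X) a))\<rparr>"

context
  fixes alg :: "'k::field \<Rightarrow> 'a::ring_1" and N :: "('a, 'y) bimod" and e :: "'y \<Rightarrow> 'z" and u
  assumes bm: "bimodule alg N" and inverse: "\<And>x. x \<in> bcar N \<Longrightarrow> u (e x) = x"
begin

lemma transport_bimodule: "bimodule alg (transport_bimod N e u)"
  unfolding bimodule_def transport_bimod_def bimod.simps ball_simps
  apply (intro conjI ballI allI)
  apply (simp_all add: inverse bm_simps[OF bm] bm_axioms[OF bm])
  by (simp_all add: inverse bm_simps[OF bm] bm_comm[OF bm])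

lemma transport_hom: "bimod_hom (transport_bimod N e u) N u"
  unfolding bimod_hom_def transport_bimod_def by (simp add: inverse bm_simps[OF bm])

end

definition eval_tensors :: "('a, 'y) bimod \<Rightarrow> ('x \<Rightarrow> 'y) \<Rightarrow> ('a \<times> 'x \<times> 'a) list \<Rightarrow> 'y" where
  "eval_tensors N pre xs =
     foldr (\<lambda>(a, m, b) r. badd N (bract N (blact N a (pre m)) b) r) xs (bzero N)"

lemma eval_tensors_Nil[simp]: "eval_tensors N pre [] = bzero N"
  by (simp add: eval_tensors_def)

lemma eval_tensors_Cons[simp]:
  "eval_tensors N pre ((a, m, b) # xs) =
     badd N (bract N (blact N a (pre m)) b) (eval_tensors N pre xs)"
  by (simp add: eval_tensors_def)

context
  fixes alg :: "'k::field \<Rightarrow> 'a::ring_1" and N :: "('a, 'y) bimod" and pre :: "'x \<Rightarrow> 'y"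
  assumes bm: "bimodule alg N" and pre: "\<And>m. pre m \<in> bcar N"
begin

lemma eval_tensors_in: "eval_tensors N pre xs \<in> bcar N"
  by (induction xs) (auto simp: bm_simps[OF bm] pre)

lemma eval_tensors_append:
  "eval_tensors N pre (xs @ ys) = badd N (eval_tensors N pre xs) (eval_tensors N pre ys)"
  by (induction xs) (auto simp: bm_simps[OF bm] pre eval_tensors_in bm_assoc[OF bm])

lemma eval_tensors_neg:
  "eval_tensors N pre (map (\<lambda>(a, y). (- a, y)) xs) = bneg N (eval_tensors N pre xs)"
  by (induction xs) (auto simp: bm_simps[OF bm] pre eval_tensors_in bm_neg_add[OF bm]
      bm_lact_uminus[OF bm] bm_ract_neg[OF bm])

lemma eval_tensors_lact:
  "eval_tensors N pre (map (\<lambda>(a, y). (c * a, y)) xs) = blact N c (eval_tensors N pre xs)"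
  by (induction xs) (auto simp: bm_simps[OF bm] pre eval_tensors_in bm_lact_add[OF bm]
      bm_lact_mult[OF bm] bm_lr[OF bm])

lemma eval_tensors_ract:
  "eval_tensors N pre (map (\<lambda>(a, m, b). (a, m, b * c)) xs) = bract N (eval_tensors N pre xs) c"
  by (induction xs) (auto simp: bm_simps[OF bm] pre eval_tensors_in bm_ract_add[OF bm]
      bm_ract_mult[OF bm])

lemma sub_bimod_range_eval_tensors: "sub_bimod N (range (eval_tensors N pre))"
  unfolding sub_bimod_def
proof (intro conjI ballI allI)
  show "range (eval_tensors N pre) \<subseteq> bcar N" using eval_tensors_in by auto
  show "bzero N \<in> range (eval_tensors N pre)" by (rule range_eqI[of _ _ "[]"]) simp
  fix x y a assume "x \<in> range (eval_tensors N pre)"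
  then obtain xs where xs: "x = eval_tensors N pre xs" by auto
  show "bneg N x \<in> range (eval_tensors N pre)"
    using eval_tensors_neg xs by (metis rangeI)
  show "blact N a x \<in> range (eval_tensors N pre)"
    using eval_tensors_lact xs by (metis rangeI)
  show "bract N x a \<in> range (eval_tensors N pre)"
    using eval_tensors_ract xs by (metis rangeI)
  assume "y \<in> range (eval_tensors N pre)"
  then obtain ys where ys: "y = eval_tensors N pre ys" by auto
  show "badd N x y \<in> range (eval_tensors N pre)"
    using eval_tensors_append xs ys by (metis rangeI)
qed

end

text \<open>Projectivity only tests surjections from bimodules carried by sets of lists of triples.
  The sub-bimodule generated by chosen preimages of the elements of M is a quotient of such lists,
  so it can be transported to that carrier type.\<close>

lemma surj_hom_from_tensor_lists:
  fixes M :: "('a::ring_1, 'x) bimod" and N0 :: "('a, 'y) bimod" and alg :: "'k::field \<Rightarrow> 'a"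
  assumes bN0: "bimodule alg N0" and g: "bimod_hom N0 M g" and surj: "g ` bcar N0 = bcar M"
  obtains N :: "('a, ('a \<times> 'x \<times> 'a) list set) bimod" and u
  where "bimodule alg N" "bimod_hom N N0 u" "(\<lambda>X. g (u X)) ` bcar N = bcar M"
proof -
  define pre where "pre m = (if m \<in> bcar M then SOME z. z \<in> bcar N0 \<and> g z = m else bzero N0)" for m
  have pre_ex: "\<exists>z. z \<in> bcar N0 \<and> g z = m" if "m \<in> bcar M" for m
    using surj that by (metis imageE)
  have pre_in: "pre m \<in> bcar N0" for m
    using someI_ex[OF pre_ex[of m]] bm_zero[OF bN0] unfolding pre_def by auto
  have g_pre: "g (pre m) = m" if "m \<in> bcar M" for m
    using someI_ex[OF pre_ex[OF that]] that unfolding pre_def by auto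
  define ev where "ev = eval_tensors N0 pre"
  define S where "S = range ev"
  have S: "sub_bimod N0 S"
    unfolding S_def ev_def by (rule sub_bimod_range_eval_tensors[OF bN0 pre_in])
  define N1 where "N1 = N0\<lparr>bcar := S\<rparr>"
  define e :: "'y \<Rightarrow> ('a \<times> 'x \<times> 'a) list set" where "e y = {xs. ev xs = y}" for y
  define u where "u X = ev (SOME xs. xs \<in> X)" for X :: "('a \<times> 'x \<times> 'a) list set"
  have ue: "u (e y) = y" if "y \<in> bcar N1" for y
  proof -
    have "y \<in> range ev" using that unfolding N1_def S_def by simp
    then obtain xs where "ev xs = y" by auto
    then have "\<exists>xs. xs \<in> e y" unfolding e_def by auto
    from someI_ex[OF this] show ?thesis unfolding u_def e_def by simp
  qed
  define N where "N = transport_bimod N1 e u"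
  have bN1: "bimodule alg N1" unfolding N1_def using sub_bimod_bimodule[OF bN0 S] .
  have bN: "bimodule alg N" unfolding N_def using transport_bimodule[of alg N1 u e, OF bN1 ue] .
  have u: "bimod_hom N N0 u"
    using hom_comp[OF transport_hom[of alg N1 u e, OF bN1 ue]
        hom_inclusion[OF sub_bimodD(1)[OF S], folded N1_def]]
    unfolding N_def N1_def by simp
  have "(\<lambda>X. g (u X)) ` bcar N = bcar M"
  proof
    show "(\<lambda>X. g (u X)) ` bcar N \<subseteq> bcar M" using hom_car[OF hom_comp[OF u g]] by auto
    show "bcar M \<subseteq> (\<lambda>X. g (u X)) ` bcar N"
    proof
      fix m assume m: "m \<in> bcar M"
      have "pre m = ev [(1, m, 1)]" unfolding ev_def using pre_in bm_simps[OF bN0] by simp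
      then have "pre m \<in> bcar N1" unfolding N1_def S_def by simp
      then have "e (pre m) \<in> bcar N" "g (u (e (pre m))) = m"
        using ue g_pre[OF m] unfolding N_def transport_bimod_def by auto
      then show "m \<in> (\<lambda>X. g (u X)) ` bcar N" by (metis image_eqI)
    qed
  qed
  with bN u show thesis by (rule that)
qed

lemma projective_bimod_split:
  fixes M :: "('a::ring_1, 'x) bimod" and N0 :: "('a, 'y) bimod" and alg :: "'k::field \<Rightarrow> 'a"
  assumes proj: "projective_bimod alg M" and bN0: "bimodule alg N0"
    and g: "bimod_hom N0 M g" and surj: "g ` bcar N0 = bcar M"
  shows "\<exists>s. bimod_hom M N0 s \<and> (\<forall>x\<in>bcar M. g (s x) = x)"
proof -
  obtain N :: "('a, ('a \<times> 'x \<times> 'a) list set) bimod" and u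
    where N: "bimodule alg N" "bimod_hom N N0 u" "(\<lambda>X. g (u X)) ` bcar N = bcar M"
    using surj_hom_from_tensor_lists[OF bN0 g surj] by blast
  then obtain s where "bimod_hom M N s" "\<forall>x\<in>bcar M. g (u (s x)) = x"
    using proj hom_comp[OF N(2) g] unfolding projective_bimod_def by blast
  then show ?thesis using hom_comp[OF _ N(2)] by blast
qed

definition pullback_bimod ::
  "('a, 'm) bimod \<Rightarrow> ('a, 'n) bimod \<Rightarrow> ('m \<Rightarrow> 't) \<Rightarrow> ('n \<Rightarrow> 't) \<Rightarrow> ('a, 'm \<times> 'n) bimod" where
  "pullback_bimod P Q D h =
    \<lparr>bcar = {z. fst z \<in> bcar P \<and> snd z \<in> bcar Q \<and> D (fst z) = h (snd z)},
     bzero = (bzero P, bzero Q),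
     badd = (\<lambda>u v. (badd P (fst u) (fst v), badd Q (snd u) (snd v))),
     bneg = (\<lambda>u. (bneg P (fst u), bneg Q (snd u))),
     blact = (\<lambda>a u. (blact P a (fst u), blact Q a (snd u))),
     bract = (\<lambda>u a. (bract P (fst u) a, bract Q (snd u) a))\<rparr>"

lemma pullback_bimodule:
  assumes bP: "bimodule alg P" and bQ: "bimodule alg Q" and bT: "bimodule alg T"
    and D: "bimod_hom P T D" and h: "bimod_hom Q T h"
  shows "bimodule alg (pullback_bimod P Q D h)"
  unfolding bimodule_def pullback_bimod_def bimod.simps mem_Collect_eq
  apply (intro conjI ballI allI)
  apply (simp_all add: bm_simps[OF bP] bm_simps[OF bQ] bm_axioms[OF bP] bm_axioms[OF bQ]
      hom_add[OF D] hom_add[OF h] hom_lact[OF D] hom_lact[OF h] hom_ract[OF D] hom_ract[OF h]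
      hom_zero[OF bP bT D] hom_zero[OF bQ bT h] hom_neg[OF bP bT D] hom_neg[OF bQ bT h])
  by (simp add: bm_comm[OF bP] bm_comm[OF bQ])

lemma pullback_fst: "bimod_hom (pullback_bimod P Q D h) P fst"
  unfolding bimod_hom_def pullback_bimod_def by simp

lemma pullback_snd: "bimod_hom (pullback_bimod P Q D h) Q snd"
  unfolding bimod_hom_def pullback_bimod_def by simp

lemma quot_pullback_snd_surj:
  assumes bP': "bimodule alg P'" and S: "sub_bimod P' S" and sub: "h ` bcar P' \<subseteq> D ` bcar P"
  shows "(\<lambda>z. coset P' S (snd z)) ` bcar (pullback_bimod P P' D h) = bcar (quot_bimod P' S)"
proof
  show "(\<lambda>z. coset P' S (snd z)) ` bcar (pullback_bimod P P' D h) \<subseteq> bcar (quot_bimod P' S)"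
    using hom_car[OF hom_comp[OF pullback_snd quot_hom[OF bP' S]]] by blast
  show "bcar (quot_bimod P' S) \<subseteq> (\<lambda>z. coset P' S (snd z)) ` bcar (pullback_bimod P P' D h)"
  proof
    fix X assume "X \<in> bcar (quot_bimod P' S)"
    then obtain y where y: "y \<in> bcar P'" "X = coset P' S y" unfolding quot_bimod_def by auto
    obtain p where "p \<in> bcar P" "D p = h y" using sub y(1) by (metis imageE subsetD imageI)
    then have "(p, y) \<in> bcar (pullback_bimod P P' D h)" unfolding pullback_bimod_def using y by simp
    then show "X \<in> (\<lambda>z. coset P' S (snd z)) ` bcar (pullback_bimod P P' D h)"
      using y(2) by (metis image_eqI snd_conv)
  qed
qed

lemma pullback_lift_of_quotient:
  assumes bP: "bimodule alg P" and bP': "bimodule alg P'" and bT: "bimodule alg T"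
    and psi: "bimod_hom P P' psi" and proj: "projective_bimod alg (quot_bimod P' (psi ` bcar P))"
    and D: "bimod_hom P T D" and h: "bimod_hom P' T h" and h_sub: "h ` bcar P' \<subseteq> D ` bcar P"
  obtains z where "bimod_hom P' (pullback_bimod P P' D h) z"
    and "\<And>y. y \<in> bcar P' \<Longrightarrow> badd P' y (bneg P' (snd (z y))) \<in> psi ` bcar P"
    and "\<And>x. x \<in> bcar P \<Longrightarrow> z (psi x) = (bzero P, bzero P')"
proof -
  define S where "S = psi ` bcar P"
  have S: "sub_bimod P' S" unfolding S_def using sub_bimod_image[OF bP bP' psi] .
  define NP where "NP = pullback_bimod P P' D h"
  have bNP: "bimodule alg NP" unfolding NP_def using pullback_bimodule[OF bP bP' bT D h] .
  have bQ: "bimodule alg (quot_bimod P' S)" using proj unfolding projective_bimod_def S_def by blast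
  have pi: "bimod_hom P' (quot_bimod P' S) (coset P' S)" using quot_hom[OF bP' S] .
  obtain s where s: "bimod_hom (quot_bimod P' S) NP s"
    and s_split: "\<forall>X\<in>bcar (quot_bimod P' S). coset P' S (snd (s X)) = X"
    using projective_bimod_split[OF proj[folded S_def] bNP
        hom_comp[OF pullback_snd[of P P' D h, folded NP_def] pi]
        quot_pullback_snd_surj[OF bP' S h_sub, folded NP_def]] by blast
  define z where "z y = s (coset P' S y)" for y
  show thesis
  proof
    show "bimod_hom P' (pullback_bimod P P' D h) z" unfolding z_def NP_def[symmetric]
      using hom_comp[OF pi s] .
    fix y assume y: "y \<in> bcar P'"
    have "snd (z y) \<in> bcar P'" "coset P' S (snd (z y)) = coset P' S y"
      using hom_car[OF hom_comp[OF s pullback_snd[of P P' D h, folded NP_def]]]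
        hom_car[OF pi y] s_split unfolding z_def by auto
    then show "badd P' y (bneg P' (snd (z y))) \<in> psi ` bcar P"
      using coset_eq_iff[OF bP' S] y unfolding S_def by metis
  next
    fix x assume x: "x \<in> bcar P"
    have "coset P' S (psi x) = bzero (quot_bimod P' S)"
      using quot_zero_iff[OF bP' S] hom_car[OF psi x] x unfolding S_def by simp
    then show "z (psi x) = (bzero P, bzero P')"
      using hom_zero[OF bQ bNP s] unfolding z_def NP_def pullback_bimod_def by simp
  qed
qed

text \<open>The correction y - snd (z y) + psi (fst (z y)) of the identity lies in psi(P);
  followed by the inverse of psi it is the required retraction.\<close>

lemma retraction_extension:
  fixes alg :: "'k::field \<Rightarrow> 'a::ring_1" and P :: "('a, 'm) bimod" and P' :: "('a, 'n) bimod"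
    and T :: "('a, 't) bimod"
  assumes bP: "bimodule alg P" and bP': "bimodule alg P'" and bT: "bimodule alg T"
    and psi: "bimod_hom P P' psi" and inj: "inj_on psi (bcar P)"
    and proj: "projective_bimod alg (quot_bimod P' (psi ` bcar P))"
    and D: "bimod_hom P T D" and h: "bimod_hom P' T h"
    and h_psi: "\<forall>x\<in>bcar P. h (psi x) = D x" and h_sub: "h ` bcar P' \<subseteq> D ` bcar P"
  shows "\<exists>f. bimod_hom P' P f \<and> (\<forall>x\<in>bcar P. f (psi x) = x) \<and> (\<forall>y\<in>bcar P'. D (f y) = h y)"
proof -
  obtain z where z: "bimod_hom P' (pullback_bimod P P' D h) z"
    and z_diff: "\<And>y. y \<in> bcar P' \<Longrightarrow> badd P' y (bneg P' (snd (z y))) \<in> psi ` bcar P"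
    and z_psi: "\<And>x. x \<in> bcar P \<Longrightarrow> z (psi x) = (bzero P, bzero P')"
    using pullback_lift_of_quotient[OF bP bP' bT psi proj D h h_sub] by blast
  have z_in: "fst (z y) \<in> bcar P" "snd (z y) \<in> bcar P'" "D (fst (z y)) = h (snd (z y))"
    if "y \<in> bcar P'" for y
    using hom_car[OF z that] unfolding pullback_bimod_def by auto
  define w where "w y = badd P' (badd P' y (bneg P' (snd (z y)))) (psi (fst (z y)))" for y
  have w: "bimod_hom P' P' w" unfolding w_def
    using hom_plus[OF bP' hom_plus[OF bP' hom_id hom_uminus[OF bP' hom_comp[OF z pullback_snd]]]
        hom_comp[OF hom_comp[OF z pullback_fst] psi]] .
  have w_in: "w y \<in> psi ` bcar P" if y: "y \<in> bcar P'" for y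
    unfolding w_def using sub_bimodD(3)[OF sub_bimod_image[OF bP bP' psi] z_diff[OF y]] z_in[OF y]
    by simp
  define f where "f y = inv_into (bcar P) psi (w y)" for y
  have f: "bimod_hom P' P f"
    unfolding f_def using hom_inv_into[OF bP bP' psi inj w] w_in by blast
  have "f (psi x) = x" if x: "x \<in> bcar P" for x
  proof -
    have "w (psi x) = psi x"
      unfolding w_def using z_psi[OF x] hom_zero[OF bP bP' psi] hom_car[OF psi x] bm_simps[OF bP']
      by simp
    then show ?thesis unfolding f_def using inj x by (simp add: inv_into_f_f)
  qed
  moreover have "D (f y) = h y" if y: "y \<in> bcar P'" for y
  proof -
    have "psi (f y) = w y" unfolding f_def using w_in[OF y] by (simp add: f_inv_into_f)
    then have "D (f y) = h (w y)" using h_psi hom_car[OF f y] by metis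
    also have "\<dots> = badd T (badd T (h y) (bneg T (h (snd (z y))))) (D (fst (z y)))"
      unfolding w_def using y z_in[OF y] h_psi hom_add[OF h] hom_neg[OF bP' bT h] hom_car[OF psi]
        bm_simps[OF bP'] by simp
    also have "\<dots> = h y"
      using z_in[OF y] hom_car[OF h] y bm_simps[OF bT] bm_assoc[OF bT] by simp
    finally show ?thesis .
  qed
  ultimately show ?thesis using f by blast
qed


section \<open>Retracting a chain map\<close>

lemma bimod_resolutionD:
  assumes "bimod_resolution alg P d eps"
  shows "bimodule alg (P n)" "bimod_hom (P (Suc n)) (P n) (d n)" "bimod_hom (P 0) reg_bimod eps"
    "eps ` bcar (P 0) = UNIV" "{x \<in> bcar (P 0). eps x = 0} = d 0 ` bcar (P 1)"
    "{x \<in> bcar (P (Suc n)). d n x = bzero (P n)} = d (Suc n) ` bcar (P (Suc (Suc n)))"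
  using assms unfolding bimod_resolution_def by simp_all

lemma chain_map_lifting_idD:
  assumes "chain_map_lifting_id P d eps P' d' eps' f"
  shows "bimod_hom (P n) (P' n) (f n)" "x \<in> bcar (P (Suc n)) \<Longrightarrow> d' n (f (Suc n) x) = f n (d n x)"
    "x \<in> bcar (P 0) \<Longrightarrow> eps' (f 0 x) = eps x"
  using assms unfolding chain_map_lifting_id_def by simp_all

lemma image_boundaries_0:
  assumes resP: "bimod_resolution alg P d eps" and resP': "bimod_resolution alg P' d' eps'"
    and f: "bimod_hom (P' 0) (P 0) f" and aug: "\<forall>y\<in>bcar (P' 0). eps (f y) = eps' y"
  shows "f ` d' 0 ` bcar (P' 1) \<subseteq> d 0 ` bcar (P 1)"
proof clarify
  fix y assume y: "y \<in> bcar (P' 1)"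
  have "d' 0 y \<in> bcar (P' 0)" "eps' (d' 0 y) = 0" using bimod_resolutionD(5)[OF resP'] y by auto
  then have "f (d' 0 y) \<in> bcar (P 0)" "eps (f (d' 0 y)) = 0" using hom_car[OF f] aug by auto
  then show "f (d' 0 y) \<in> d 0 ` bcar (P 1)" using bimod_resolutionD(5)[OF resP] by blast
qed

lemma image_boundaries_Suc:
  assumes resP: "bimod_resolution alg P d eps" and resP': "bimod_resolution alg P' d' eps'"
    and f: "bimod_hom (P' n) (P n) f" and g: "bimod_hom (P' (Suc n)) (P (Suc n)) g"
    and comm: "\<forall>y\<in>bcar (P' (Suc n)). d n (g y) = f (d' n y)"
  shows "g ` d' (Suc n) ` bcar (P' (Suc (Suc n))) \<subseteq> d (Suc n) ` bcar (P (Suc (Suc n)))"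
proof clarify
  fix y assume y: "y \<in> bcar (P' (Suc (Suc n)))"
  have "d' (Suc n) y \<in> bcar (P' (Suc n))" "d' n (d' (Suc n) y) = bzero (P' n)"
    using bimod_resolutionD(6)[OF resP', of n] y by auto
  then have "g (d' (Suc n) y) \<in> bcar (P (Suc n))" "d n (g (d' (Suc n) y)) = bzero (P n)"
    using hom_car[OF g] comm
      hom_zero[OF bimod_resolutionD(1)[OF resP'] bimod_resolutionD(1)[OF resP] f]
    by auto
  then show "g (d' (Suc n) y) \<in> d (Suc n) ` bcar (P (Suc (Suc n)))"
    using bimod_resolutionD(6)[OF resP, of n] by blast
qed

lemma chain_retraction_exists:
  fixes alg :: "'k::field \<Rightarrow> 'a::ring_1"
    and P :: "nat \<Rightarrow> ('a, 'm) bimod" and d :: "nat \<Rightarrow> 'm \<Rightarrow> 'm" and eps :: "'m \<Rightarrow> 'a"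
    and P' :: "nat \<Rightarrow> ('a, 'n) bimod" and d' :: "nat \<Rightarrow> 'n \<Rightarrow> 'n" and eps' :: "'n \<Rightarrow> 'a"
    and psi :: "nat \<Rightarrow> 'm \<Rightarrow> 'n"
  assumes alg: "k_algebra alg"
    and resP: "bimod_resolution alg P d eps" and resP': "bimod_resolution alg P' d' eps'"
    and psi: "chain_map_lifting_id P d eps P' d' eps' psi"
    and inj: "\<And>n. inj_on (psi n) (bcar (P n))"
    and proj: "\<And>n. projective_bimod alg (quot_bimod (P' n) (psi n ` bcar (P n)))"
  shows "\<exists>psi'. chain_map_lifting_id P' d' eps' P d eps psi'
                \<and> (\<forall>n. \<forall>x\<in>bcar (P n). psi' n (psi n x) = x)"
proof -
  note P = bimod_resolutionD[OF resP] and P' = bimod_resolutionD[OF resP']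
    and psi = chain_map_lifting_idD[OF psi]
  define R where "R n f \<longleftrightarrow> bimod_hom (P' n) (P n) f \<and> (\<forall>x\<in>bcar (P n). f (psi n x) = x)
      \<and> f ` d' n ` bcar (P' (Suc n)) \<subseteq> d n ` bcar (P (Suc n))
      \<and> (n = 0 \<longrightarrow> (\<forall>y\<in>bcar (P' 0). eps (f y) = eps' y))" for n f
    \<comment> \<open>The image condition is the hypothesis of the extension in the next degree.\<close>
  have base: "\<exists>f. R 0 f"
  proof -
    obtain f where f: "bimod_hom (P' 0) (P 0) f" "\<forall>x\<in>bcar (P 0). f (psi 0 x) = x"
      "\<forall>y\<in>bcar (P' 0). eps (f y) = eps' y"
      using retraction_extension[OF P(1) P'(1) reg_bimodule[OF alg] psi(1) inj proj P(3) P'(3)]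
        psi(3) P(4) by blast
    then show ?thesis using image_boundaries_0[OF resP resP' f(1,3)] unfolding R_def by auto
  qed
  have step: "\<exists>f'. R (Suc n) f' \<and> (\<forall>y\<in>bcar (P' (Suc n)). d n (f' y) = f (d' n y))"
    if Rf: "R n f" for n f
  proof -
    have f: "bimod_hom (P' n) (P n) f" "\<forall>x\<in>bcar (P n). f (psi n x) = x"
      "f ` d' n ` bcar (P' (Suc n)) \<subseteq> d n ` bcar (P (Suc n))"
      using Rf unfolding R_def by auto
    have h_psi: "\<forall>x\<in>bcar (P (Suc n)). f (d' n (psi (Suc n) x)) = d n x"
      using psi(2) f(2) hom_car[OF P(2)] by simp
    have h_sub: "(\<lambda>y. f (d' n y)) ` bcar (P' (Suc n)) \<subseteq> d n ` bcar (P (Suc n))"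
      using f(3) by auto
    obtain f' where f': "bimod_hom (P' (Suc n)) (P (Suc n)) f'"
      "\<forall>x\<in>bcar (P (Suc n)). f' (psi (Suc n) x) = x"
      "\<forall>y\<in>bcar (P' (Suc n)). d n (f' y) = f (d' n y)"
      using retraction_extension[OF P(1) P'(1) P(1) psi(1) inj proj P(2) hom_comp[OF P'(2) f(1)]
          h_psi h_sub] by blast
    then show ?thesis using image_boundaries_Suc[OF resP resP' f(1) f'(1,3)] unfolding R_def by auto
  qed
  obtain F where F: "\<And>n. R n (F n)"
    and F_chain: "\<And>n. \<forall>y\<in>bcar (P' (Suc n)). d n (F (Suc n) y) = F n (d' n y)"
    using dependent_nat_choice[of R "\<lambda>n f f'. \<forall>y\<in>bcar (P' (Suc n)). d n (f' y) = f (d' n y)",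
        OF base step] by blast
  have "chain_map_lifting_id P' d' eps' P d eps F"
    unfolding chain_map_lifting_id_def using F F_chain unfolding R_def by blast
  moreover have "\<forall>n. \<forall>x\<in>bcar (P n). F n (psi n x) = x" using F unfolding R_def by blast
  ultimately show ?thesis by blast
qed


section \<open>Homogeneous components\<close>

definition add_monoid :: "('a, 'm) bimod \<Rightarrow> 'm monoid" where
  "add_monoid M = \<lparr>carrier = bcar M, mult = badd M, one = bzero M\<rparr>"

definition gsum :: "('a, 'm) bimod \<Rightarrow> ('i \<Rightarrow> 'm) \<Rightarrow> 'i set \<Rightarrow> 'm" where
  "gsum M f A = finprod (add_monoid M) f A"

context
  fixes alg :: "'k::field \<Rightarrow> 'a::ring_1" and M :: "('a, 'm) bimod"
  assumes bm: "bimodule alg M"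
begin

lemma comm_monoid_add_monoid: "comm_monoid (add_monoid M)"
  unfolding add_monoid_def
  apply (rule comm_monoidI)
  apply (simp_all add: bm_simps[OF bm] bm_assoc[OF bm])
  by (simp add: bm_comm[OF bm])

lemma gsum_closed[simp]: "(\<And>j. j \<in> A \<Longrightarrow> f j \<in> bcar M) \<Longrightarrow> gsum M f A \<in> bcar M"
  unfolding gsum_def using comm_monoid.finprod_closed[OF comm_monoid_add_monoid, of f A]
  by (auto simp: add_monoid_def)

lemma gsum_empty[simp]: "gsum M f {} = bzero M"
  unfolding gsum_def using comm_monoid.finprod_empty[OF comm_monoid_add_monoid]
  by (simp add: add_monoid_def)

lemma gsum_infinite: "infinite A \<Longrightarrow> gsum M f A = bzero M"
  unfolding gsum_def using comm_monoid.finprod_infinite[OF comm_monoid_add_monoid]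
  by (simp add: add_monoid_def)

lemma gsum_insert:
  "finite A \<Longrightarrow> a \<notin> A \<Longrightarrow> (\<And>j. j \<in> insert a A \<Longrightarrow> f j \<in> bcar M) \<Longrightarrow>
    gsum M f (insert a A) = badd M (f a) (gsum M f A)"
  unfolding gsum_def using comm_monoid.finprod_insert[OF comm_monoid_add_monoid, of A a f]
  by (auto simp: add_monoid_def)

lemma gsum_add:
  "(\<And>j. j \<in> A \<Longrightarrow> f j \<in> bcar M) \<Longrightarrow> (\<And>j. j \<in> A \<Longrightarrow> g j \<in> bcar M) \<Longrightarrow>
   gsum M (\<lambda>j. badd M (f j) (g j)) A = badd M (gsum M f A) (gsum M g A)"
  unfolding gsum_def using comm_monoid.finprod_multf[OF comm_monoid_add_monoid, of f A g]
  by (auto simp: add_monoid_def)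

lemma gsum_cong:
  "A = B \<Longrightarrow> (\<And>j. j \<in> B \<Longrightarrow> g j \<in> bcar M) \<Longrightarrow> (\<And>j. j \<in> B \<Longrightarrow> f j = g j) \<Longrightarrow>
   gsum M f A = gsum M g B"
  unfolding gsum_def using comm_monoid.finprod_cong'[OF comm_monoid_add_monoid, of A B g f]
  by (auto simp: add_monoid_def)

lemma gsum_mono_neutral:
  "finite B \<Longrightarrow> A \<subseteq> B \<Longrightarrow> (\<And>j. j \<in> B - A \<Longrightarrow> f j = bzero M) \<Longrightarrow>
   (\<And>j. j \<in> B \<Longrightarrow> f j \<in> bcar M) \<Longrightarrow> gsum M f A = gsum M f B"
  unfolding gsum_def
  using comm_monoid.finprod_mono_neutral_cong_left[OF comm_monoid_add_monoid, of B A f f]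
  by (auto simp: add_monoid_def)

lemma gsum_reindex:
  "(\<And>j. j \<in> h ` A \<Longrightarrow> f j \<in> bcar M) \<Longrightarrow> inj_on h A \<Longrightarrow>
   gsum M f (h ` A) = gsum M (\<lambda>x. f (h x)) A"
  unfolding gsum_def using comm_monoid.finprod_reindex[OF comm_monoid_add_monoid, of f h A]
  by (auto simp: add_monoid_def)

lemma gsum_singleton: "f k \<in> bcar M \<Longrightarrow> gsum M f {k} = f k"
  using gsum_insert[of "{}" k f] bm by simp

lemma lsum_eq_gsum:
  "(\<And>j. j \<in> set xs \<Longrightarrow> f j \<in> bcar M) \<Longrightarrow> distinct xs \<Longrightarrow> lsum M (map f xs) = gsum M f (set xs)"
proof (induction xs)
  case (Cons a xs)
  then show ?case using gsum_insert[of "set xs" a f] by (simp add: lsum_def)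
qed (simp add: lsum_def)

end

definition additive_map :: "('a, 'm) bimod \<Rightarrow> ('a, 'n) bimod \<Rightarrow> ('m \<Rightarrow> 'n) \<Rightarrow> bool" where
  "additive_map M N \<phi> \<longleftrightarrow> (\<forall>x\<in>bcar M. \<phi> x \<in> bcar N)
     \<and> (\<forall>x\<in>bcar M. \<forall>y\<in>bcar M. \<phi> (badd M x y) = badd N (\<phi> x) (\<phi> y))"

lemma hom_additive: "bimod_hom M N f \<Longrightarrow> additive_map M N f"
  unfolding additive_map_def bimod_hom_def by blast

lemma lact_additive: "bimodule alg M \<Longrightarrow> additive_map M M (blact M a)"
  unfolding additive_map_def by (simp add: bm_lact_add)

lemma ract_additive: "bimodule alg M \<Longrightarrow> additive_map M M (\<lambda>x. bract M x a)"
  unfolding additive_map_def by (simp add: bm_ract_add)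

lemma neg_additive: "bimodule alg M \<Longrightarrow> additive_map M M (bneg M)"
  unfolding additive_map_def by (simp add: bm_neg_add)

context
  fixes alg :: "'k::field \<Rightarrow> 'a::ring_1" and M :: "('a, 'm) bimod" and N :: "('a, 'n) bimod"
    and \<phi> :: "'m \<Rightarrow> 'n"
  assumes bM: "bimodule alg M" and bN: "bimodule alg N" and \<phi>: "additive_map M N \<phi>"
begin

lemma additive_map_car: "x \<in> bcar M \<Longrightarrow> \<phi> x \<in> bcar N"
  using \<phi> unfolding additive_map_def by blast

lemma additive_map_add: "x \<in> bcar M \<Longrightarrow> y \<in> bcar M \<Longrightarrow> \<phi> (badd M x y) = badd N (\<phi> x) (\<phi> y)"
  using \<phi> unfolding additive_map_def by blast

lemma additive_map_zero: "\<phi> (bzero M) = bzero N"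
  using additive_map_add[of "bzero M" "bzero M"] bm_idem_zero[OF bN] additive_map_car bM by simp

lemma additive_map_gsum:
  "(\<And>j. j \<in> A \<Longrightarrow> f j \<in> bcar M) \<Longrightarrow> \<phi> (gsum M f A) = gsum N (\<lambda>j. \<phi> (f j)) A"
proof (induction A rule: infinite_finite_induct)
  case (infinite A)
  then show ?case
    using gsum_infinite[OF bM, of A f] gsum_infinite[OF bN, of A] additive_map_zero by simp
next
  case empty
  then show ?case using additive_map_zero bM bN by simp
next
  case (insert a A)
  have "\<phi> (gsum M f (insert a A)) = \<phi> (badd M (f a) (gsum M f A))"
    using gsum_insert[OF bM insert(1,2)] insert(4) by simp
  also have "\<dots> = badd N (\<phi> (f a)) (\<phi> (gsum M f A))"
    using additive_map_add insert(4) gsum_closed[OF bM, of A f] by simp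
  also have "\<dots> = gsum N (\<lambda>j. \<phi> (f j)) (insert a A)"
    using gsum_insert[OF bN insert(1,2)] insert additive_map_car by simp
  finally show ?case .
qed

end

lemma graded_bimodD:
  assumes "graded_bimod Ag M Mg"
  shows "x \<in> Mg j \<Longrightarrow> x \<in> bcar M" "bzero M \<in> Mg j"
    "x \<in> Mg j \<Longrightarrow> y \<in> Mg j \<Longrightarrow> badd M x y \<in> Mg j" "x \<in> Mg j \<Longrightarrow> bneg M x \<in> Mg j"
    "a \<in> Ag i \<Longrightarrow> x \<in> Mg j \<Longrightarrow> blact M a x \<in> Mg (int i + j)"
    "a \<in> Ag i \<Longrightarrow> x \<in> Mg j \<Longrightarrow> bract M x a \<in> Mg (j + int i)"
    "x \<in> bcar M \<Longrightarrow> \<exists>N f. (\<forall>j. f j \<in> Mg j) \<and> x = lsum M (map f [-N..N])"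
    "(\<forall>j. f j \<in> Mg j) \<Longrightarrow> lsum M (map f [-N..N]) = bzero M \<Longrightarrow> j \<in> {-N..N} \<Longrightarrow> f j = bzero M"
  using assms unfolding graded_bimod_def by blast+

definition homog_decomp :: "('a, 'm) bimod \<Rightarrow> (int \<Rightarrow> 'm set) \<Rightarrow> 'm \<Rightarrow> (int \<Rightarrow> 'm) \<Rightarrow> bool" where
  "homog_decomp M Mg x c \<longleftrightarrow> (\<forall>j. c j \<in> Mg j) \<and> finite {j. c j \<noteq> bzero M}
     \<and> x = gsum M c {j. c j \<noteq> bzero M}"

definition homog_comp :: "('a, 'm) bimod \<Rightarrow> (int \<Rightarrow> 'm set) \<Rightarrow> int \<Rightarrow> 'm \<Rightarrow> 'm" where
  "homog_comp M Mg j x = (SOME c. homog_decomp M Mg x c) j"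

definition homog_supp :: "('a, 'm) bimod \<Rightarrow> (int \<Rightarrow> 'm set) \<Rightarrow> 'm \<Rightarrow> int set" where
  "homog_supp M Mg x = {j. homog_comp M Mg j x \<noteq> bzero M}"

context
  fixes alg :: "'k::field \<Rightarrow> 'a::ring_1" and Ag :: "nat \<Rightarrow> 'a set"
    and M :: "('a, 'm) bimod" and Mg :: "int \<Rightarrow> 'm set"
  assumes bm: "bimodule alg M" and gr: "graded_bimod Ag M Mg"
begin

lemma homog_decomp_iff_gsum:
  assumes c: "\<And>j. c j \<in> Mg j" and B: "finite B" and zero: "\<And>j. j \<notin> B \<Longrightarrow> c j = bzero M"
  shows "homog_decomp M Mg x c \<longleftrightarrow> x = gsum M c B"
proof -
  have supp: "{j. c j \<noteq> bzero M} \<subseteq> B" using zero by blast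
  then have "gsum M c {j. c j \<noteq> bzero M} = gsum M c B"
    using gsum_mono_neutral[OF bm B] c graded_bimodD(1)[OF gr] by blast
  then show ?thesis using c finite_subset[OF supp B] unfolding homog_decomp_def by auto
qed

lemma homog_decomp_exists: "x \<in> bcar M \<Longrightarrow> \<exists>c. homog_decomp M Mg x c"
proof -
  assume "x \<in> bcar M"
  then obtain N f where f: "\<And>j. f j \<in> Mg j" "x = lsum M (map f [-N..N])"
    using graded_bimodD(7)[OF gr] by blast
  define c where "c j = (if j \<in> {-N..N} then f j else bzero M)" for j
  have "lsum M (map f [-N..N]) = gsum M f (set [-N..N])"
    by (rule lsum_eq_gsum[OF bm]) (use f graded_bimodD(1)[OF gr] in auto)
  then have "x = gsum M f {-N..N}" using f by simp
  also have "\<dots> = gsum M c {-N..N}"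
    by (rule gsum_cong[OF bm]) (use f graded_bimodD(1)[OF gr] in \<open>auto simp: c_def\<close>)
  finally have x: "x = gsum M c {-N..N}" .
  have c_in: "c j \<in> Mg j" for j using f graded_bimodD(2)[OF gr] by (simp add: c_def)
  have c_zero: "c j = bzero M" if "j \<notin> {-N..N}" for j unfolding c_def using that by (rule if_not_P)
  have "homog_decomp M Mg x c"
    using homog_decomp_iff_gsum[OF c_in finite_atLeastAtMost_int c_zero] x by simp
  then show ?thesis by blast
qed

lemma homog_decomp_unique:
  assumes c: "homog_decomp M Mg x c" and c': "homog_decomp M Mg x c'"
  shows "c = c'"
proof
  fix j
  define B where "B = {j. c j \<noteq> bzero M} \<union> {j. c' j \<noteq> bzero M}"
  have "finite B" using c c' unfolding homog_decomp_def B_def by simp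
  then obtain N where "abs ` B \<subseteq> {..N}" using finite_int_iff_bounded_le by blast
  then have B: "B \<subseteq> {-N..N}" by (auto simp: abs_le_iff)
  have in_Mg: "c j \<in> Mg j" "c' j \<in> Mg j" for j using c c' unfolding homog_decomp_def by auto
  note in_M = graded_bimodD(1)[OF gr in_Mg(1)] graded_bimodD(1)[OF gr in_Mg(2)]
  have zero: "c j = bzero M" "c' j = bzero M" if "j \<notin> {-N..N}" for j
    using B that unfolding B_def by auto
  have x: "x = gsum M c {-N..N}" "x = gsum M c' {-N..N}"
    using homog_decomp_iff_gsum[of c "{-N..N}" x] homog_decomp_iff_gsum[of c' "{-N..N}" x]
      in_Mg zero c c' by auto
  define f where "f j = badd M (c j) (bneg M (c' j))" for j
  have f_in: "f j \<in> Mg j" for j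
    unfolding f_def using in_Mg graded_bimodD(3,4)[OF gr] by blast
  have "lsum M (map f [-N..N]) = gsum M f (set [-N..N])"
    by (rule lsum_eq_gsum[OF bm]) (use f_in graded_bimodD(1)[OF gr] in auto)
  then have "lsum M (map f [-N..N]) = gsum M f {-N..N}" by simp
  also have "\<dots> = badd M (gsum M c {-N..N}) (gsum M (\<lambda>j. bneg M (c' j)) {-N..N})"
    unfolding f_def by (rule gsum_add[OF bm]) (use in_M bm_neg[OF bm] in blast)+
  also have "\<dots> = badd M (gsum M c {-N..N}) (bneg M (gsum M c' {-N..N}))"
    using additive_map_gsum[OF bm bm neg_additive[OF bm], of "{-N..N}" c'] in_M by simp
  also have "\<dots> = bzero M"
    using x c gsum_closed[OF bm, of "{-N..N}" c] in_M bm_neg_r[OF bm] by simp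
  finally have lsum_zero: "lsum M (map f [-N..N]) = bzero M" .
  show "c j = c' j"
  proof (cases "j \<in> {-N..N}")
    case True
    have "\<forall>j. f j \<in> Mg j" using f_in by blast
    then have "f j = bzero M" using graded_bimodD(8)[OF gr _ lsum_zero True] by blast
    then show ?thesis using bm_eq_iff_diff_zero[OF bm in_M] unfolding f_def by blast
  next
    case False
    then show ?thesis using zero by simp
  qed
qed

lemma homog_comp_decomp: "x \<in> bcar M \<Longrightarrow> homog_decomp M Mg x (\<lambda>j. homog_comp M Mg j x)"
  unfolding homog_comp_def using someI_ex[OF homog_decomp_exists] by simp

lemma homog_comp_eq: "homog_decomp M Mg x c \<Longrightarrow> homog_comp M Mg j x = c j"
proof -
  assume c: "homog_decomp M Mg x c"
  then have "x \<in> bcar M"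
    unfolding homog_decomp_def using gsum_closed[OF bm] graded_bimodD(1)[OF gr] by metis
  then show ?thesis using homog_decomp_unique[OF homog_comp_decomp c] by metis
qed

lemma homog_comp_in: "x \<in> bcar M \<Longrightarrow> homog_comp M Mg j x \<in> Mg j"
  using homog_comp_decomp unfolding homog_decomp_def by blast

lemma homog_comp_car: "x \<in> bcar M \<Longrightarrow> homog_comp M Mg j x \<in> bcar M"
  using homog_comp_in graded_bimodD(1)[OF gr] by blast

lemma finite_homog_supp: "x \<in> bcar M \<Longrightarrow> finite (homog_supp M Mg x)"
  using homog_comp_decomp unfolding homog_decomp_def homog_supp_def by blast

lemma homog_comp_sum:
  assumes "x \<in> bcar M" "finite B" "homog_supp M Mg x \<subseteq> B"
  shows "x = gsum M (\<lambda>j. homog_comp M Mg j x) B"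
  using homog_decomp_iff_gsum[of "\<lambda>j. homog_comp M Mg j x" B x] homog_comp_decomp assms
    homog_comp_in unfolding homog_supp_def by blast

lemma homog_comp_add:
  assumes x: "x \<in> bcar M" and y: "y \<in> bcar M"
  shows "homog_comp M Mg j (badd M x y) = badd M (homog_comp M Mg j x) (homog_comp M Mg j y)"
proof -
  define B where "B = homog_supp M Mg x \<union> homog_supp M Mg y"
  have B: "finite B" unfolding B_def using finite_homog_supp x y by simp
  have "badd M x y
      = badd M (gsum M (\<lambda>j. homog_comp M Mg j x) B) (gsum M (\<lambda>j. homog_comp M Mg j y) B)"
    using homog_comp_sum[OF x B] homog_comp_sum[OF y B] unfolding B_def by auto
  also have "\<dots> = gsum M (\<lambda>j. badd M (homog_comp M Mg j x) (homog_comp M Mg j y)) B"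
    by (rule gsum_add[OF bm, symmetric]) (use homog_comp_car x y in auto)
  finally have
    "homog_decomp M Mg (badd M x y) (\<lambda>j. badd M (homog_comp M Mg j x) (homog_comp M Mg j y))"
    using homog_decomp_iff_gsum[OF _ B] graded_bimodD(3)[OF gr] homog_comp_in x y homog_comp_car
      bm_simps[OF bm] unfolding B_def homog_supp_def by auto
  then show ?thesis using homog_comp_eq by blast
qed

lemma homog_comp_homog:
  assumes y: "y \<in> Mg k"
  shows "homog_comp M Mg j y = (if j = k then y else bzero M)"
proof -
  have "gsum M (\<lambda>j. if j = k then y else bzero M) {k} = y"
    using gsum_singleton[OF bm, of "\<lambda>j. if j = k then y else bzero M" k] graded_bimodD(1)[OF gr y]
    by simp
  moreover have "(if j = k then y else bzero M) \<in> Mg j" for j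
    using y graded_bimodD(2)[OF gr] by simp
  ultimately have "homog_decomp M Mg y (\<lambda>j. if j = k then y else bzero M)"
    using homog_decomp_iff_gsum[of "\<lambda>j. if j = k then y else bzero M" "{k}" y] by simp
  then show ?thesis using homog_comp_eq by blast
qed

lemma homog_comp_zero[simp]: "homog_comp M Mg j (bzero M) = bzero M"
  using homog_comp_homog[OF graded_bimodD(2)[OF gr, of 0]] by simp

lemma homog_supp_zero[simp]: "homog_supp M Mg (bzero M) = {}"
  unfolding homog_supp_def by simp

end

lemma homog_comp_shift:
  assumes bM: "bimodule alg M" and grM: "graded_bimod Ag M Mg"
    and bN: "bimodule alg N" and grN: "graded_bimod Ag N Ng"
    and \<phi>: "additive_map M N \<phi>" and deg: "\<And>j y. y \<in> Mg j \<Longrightarrow> \<phi> y \<in> Ng (j + s)"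
    and x: "x \<in> bcar M"
  shows "homog_comp N Ng l (\<phi> x) = \<phi> (homog_comp M Mg (l - s) x)"
proof -
  define B where "B = homog_supp M Mg x"
  define c where "c l = \<phi> (homog_comp M Mg (l - s) x)" for l
  have B: "finite B" unfolding B_def using finite_homog_supp[OF bM grM x] .
  note comp_car = homog_comp_car[OF bM grM x] and \<phi>_car = additive_map_car[OF bM bN \<phi>]
  have c_in: "c l \<in> Ng l" for l
    unfolding c_def using deg[OF homog_comp_in[OF bM grM x], of "l - s"] by simp
  have c_zero: "c l = bzero N" if "l \<notin> (\<lambda>j. j + s) ` B" for l
  proof -
    have "l - s \<notin> B" using that by force
    then show ?thesis
      unfolding c_def B_def homog_supp_def using additive_map_zero[OF bM bN \<phi>] by simp
  qed
  have "\<phi> x = \<phi> (gsum M (\<lambda>j. homog_comp M Mg j x) B)"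
    using homog_comp_sum[OF bM grM x B] unfolding B_def by simp
  also have "\<dots> = gsum N (\<lambda>j. c (j + s)) B"
    unfolding c_def by (simp add: additive_map_gsum[OF bM bN \<phi> comp_car])
  also have "\<dots> = gsum N c ((\<lambda>j. j + s) ` B)"
    by (rule gsum_reindex[OF bN, symmetric]) (use c_in graded_bimodD(1)[OF grN] in auto)
  finally have "homog_decomp N Ng (\<phi> x) c"
    using homog_decomp_iff_gsum[OF bN grN c_in finite_imageI[OF B] c_zero] by simp
  then show ?thesis using homog_comp_eq[OF bN grN] unfolding c_def by simp
qed

lemma homog_comp_hom:
  assumes "bimodule alg M" "graded_bimod Ag M Mg" "bimodule alg N" "graded_bimod Ag N Ng"
    and g: "bimod_hom M N g" and "graded_map Mg Ng g" and "x \<in> bcar M"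
  shows "homog_comp N Ng j (g x) = g (homog_comp M Mg j x)"
proof -
  have "y \<in> Mg i \<Longrightarrow> g y \<in> Ng (i + 0)" for i y using assms(6) unfolding graded_map_def by auto
  then have "homog_comp N Ng j (g x) = g (homog_comp M Mg (j - 0) x)"
    by (rule homog_comp_shift[OF assms(1-4) hom_additive[OF g] _ assms(7)])
  then show ?thesis by simp
qed


section \<open>The degree-zero part of a bimodule map\<close>

lemma graded_algebraD:
  assumes "graded_algebra alg Ag"
  shows "0 \<in> Ag i" "a \<in> Ag i \<Longrightarrow> b \<in> Ag i \<Longrightarrow> a + b \<in> Ag i" "a \<in> Ag i \<Longrightarrow> - a \<in> Ag i"
    "a \<in> Ag i \<Longrightarrow> b \<in> Ag j \<Longrightarrow> a * b \<in> Ag (i + j)"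
    "\<forall>i. f i \<in> Ag i \<Longrightarrow> (\<Sum>i<N. f i) = 0 \<Longrightarrow> i < N \<Longrightarrow> f i = 0"
    and graded_algebra_decomp: "\<exists>N f. (\<forall>i. f i \<in> Ag i) \<and> a = (\<Sum>i<N. f i)"
proof -
  have "\<forall>a. \<exists>N f. (\<forall>i. f i \<in> Ag i) \<and> a = (\<Sum>i<N. f i)"
    using assms unfolding graded_algebra_def by (elim conjE) assumption
  then show "\<exists>N f. (\<forall>i. f i \<in> Ag i) \<and> a = (\<Sum>i<N. f i)" by (rule spec)
qed (use assms in \<open>simp_all add: graded_algebra_def\<close>)

lemma graded_algebra_induct[consumes 1, case_names zero add homog]:
  assumes "graded_algebra alg Ag" and "Q 0" and "\<And>a b. Q a \<Longrightarrow> Q b \<Longrightarrow> Q (a + b)"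
    and "\<And>i a. a \<in> Ag i \<Longrightarrow> Q a"
  shows "Q a"
proof -
  obtain N f where f: "\<And>i. f i \<in> Ag i" "a = (\<Sum>i<N. f i)"
    using graded_algebra_decomp[OF assms(1)] by blast
  have "Q (\<Sum>i<n. f i)" for n
  proof (induction n)
    case 0
    then show ?case using assms(2) by simp
  next
    case (Suc n)
    then show ?case using assms(3)[OF Suc assms(4)[OF f(1)]] by simp
  qed
  then show ?thesis using f(2) by simp
qed

definition deg0_part :: "('a, 'm) bimod \<Rightarrow> (int \<Rightarrow> 'm set) \<Rightarrow> ('a, 'n) bimod \<Rightarrow> (int \<Rightarrow> 'n set)
    \<Rightarrow> ('m \<Rightarrow> 'n) \<Rightarrow> 'm \<Rightarrow> 'n" where
  "deg0_part M Mg N Ng f x =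
     gsum N (\<lambda>j. homog_comp N Ng j (f (homog_comp M Mg j x))) (homog_supp M Mg x)"

lemma deg0_part_cong:
  assumes "bimodule alg M" "graded_bimod Ag M Mg" "x \<in> bcar M" "\<And>y. y \<in> bcar M \<Longrightarrow> f y = f' y"
  shows "deg0_part M Mg N Ng f x = deg0_part M Mg N Ng f' x"
  unfolding deg0_part_def using homog_comp_car[OF assms(1-3)] assms(4) by simp

context
  fixes alg :: "'k::field \<Rightarrow> 'a::ring_1" and Ag :: "nat \<Rightarrow> 'a set"
    and M :: "('a, 'm) bimod" and Mg :: "int \<Rightarrow> 'm set"
    and N :: "('a, 'n) bimod" and Ng :: "int \<Rightarrow> 'n set" and f :: "'m \<Rightarrow> 'n"
  assumes bM: "bimodule alg M" and grM: "graded_bimod Ag M Mg"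
    and bN: "bimodule alg N" and grN: "graded_bimod Ag N Ng" and f: "bimod_hom M N f"
begin

lemma deg0_part_term_car: "x \<in> bcar M \<Longrightarrow> homog_comp N Ng j (f (homog_comp M Mg j x)) \<in> bcar N"
  using homog_comp_car[OF bN grN] hom_car[OF f] homog_comp_car[OF bM grM] by blast

lemma deg0_part_eq_gsum:
  assumes x: "x \<in> bcar M" and B: "finite B" and supp: "homog_supp M Mg x \<subseteq> B"
  shows "deg0_part M Mg N Ng f x = gsum N (\<lambda>j. homog_comp N Ng j (f (homog_comp M Mg j x))) B"
  unfolding deg0_part_def
proof (rule gsum_mono_neutral[OF bN B supp])
  show "homog_comp N Ng j (f (homog_comp M Mg j x)) = bzero N" if "j \<in> B - homog_supp M Mg x" for j
    using that hom_zero[OF bM bN f] homog_comp_zero[OF bN grN] unfolding homog_supp_def by auto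
qed (rule deg0_part_term_car[OF x])

lemma deg0_part_car: "x \<in> bcar M \<Longrightarrow> deg0_part M Mg N Ng f x \<in> bcar N"
  unfolding deg0_part_def by (rule gsum_closed[OF bN], rule deg0_part_term_car)

lemma deg0_part_zero: "deg0_part M Mg N Ng f (bzero M) = bzero N"
  unfolding deg0_part_def using homog_supp_zero[OF bM grM] gsum_empty[OF bN] by simp

lemma deg0_part_add:
  assumes x: "x \<in> bcar M" and y: "y \<in> bcar M"
  shows "deg0_part M Mg N Ng f (badd M x y)
    = badd N (deg0_part M Mg N Ng f x) (deg0_part M Mg N Ng f y)"
proof -
  define F where "F z j = homog_comp N Ng j (f (homog_comp M Mg j z))" for z j
  define B where "B = homog_supp M Mg x \<union> homog_supp M Mg y \<union> homog_supp M Mg (badd M x y)"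
  have xy: "badd M x y \<in> bcar M" using bm_add[OF bM x y] .
  have B: "finite B" unfolding B_def using finite_homog_supp[OF bM grM] x y xy by simp
  have deg0_B: "deg0_part M Mg N Ng f z = gsum N (F z) B" if "z \<in> {x, y, badd M x y}" for z
    using deg0_part_eq_gsum[OF _ B] that x y xy unfolding F_def B_def by auto
  have "gsum N (F (badd M x y)) B = gsum N (\<lambda>j. badd N (F x j) (F y j)) B"
    unfolding F_def
    by (rule gsum_cong[OF bN]) (use homog_comp_add[OF bM grM x y] homog_comp_add[OF bN grN]
        hom_add[OF f] homog_comp_car[OF bM grM] hom_car[OF f] deg0_part_term_car bm_add[OF bN] x y
        in auto)
  also have "\<dots> = badd N (gsum N (F x) B) (gsum N (F y) B)"
    by (rule gsum_add[OF bN]) (use deg0_part_term_car x y in \<open>auto simp: F_def\<close>)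
  finally show ?thesis using deg0_B by simp
qed

lemma deg0_part_shift:
  assumes \<phi>: "additive_map M M \<phi>" and \<phi>_deg: "\<And>j y. y \<in> Mg j \<Longrightarrow> \<phi> y \<in> Mg (j + s)"
    and \<chi>: "additive_map N N \<chi>" and \<chi>_deg: "\<And>j y. y \<in> Ng j \<Longrightarrow> \<chi> y \<in> Ng (j + s)"
    and comm: "\<And>y. y \<in> bcar M \<Longrightarrow> f (\<phi> y) = \<chi> (f y)" and x: "x \<in> bcar M"
  shows "deg0_part M Mg N Ng f (\<phi> x) = \<chi> (deg0_part M Mg N Ng f x)"
proof -
  define F where "F z j = homog_comp N Ng j (f (homog_comp M Mg j z))" for z j
  define A where "A = homog_supp M Mg x"
  have A: "finite A" unfolding A_def using finite_homog_supp[OF bM grM x] .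
  have \<phi>x: "\<phi> x \<in> bcar M" using additive_map_car[OF bM bM \<phi> x] .
  note shift_M = homog_comp_shift[OF bM grM bM grM \<phi> \<phi>_deg x]
  have "homog_supp M Mg (\<phi> x) \<subseteq> (\<lambda>j. j + s) ` A"
  proof
    fix l assume "l \<in> homog_supp M Mg (\<phi> x)"
    then have "l - s \<in> A"
      using shift_M additive_map_zero[OF bM bM \<phi>] unfolding A_def homog_supp_def by force
    then show "l \<in> (\<lambda>j. j + s) ` A" by force
  qed
  then have "deg0_part M Mg N Ng f (\<phi> x) = gsum N (F (\<phi> x)) ((\<lambda>j. j + s) ` A)"
    unfolding F_def using deg0_part_eq_gsum[OF \<phi>x finite_imageI[OF A]] by blast
  also have "\<dots> = gsum N (\<lambda>j. F (\<phi> x) (j + s)) A"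
    by (rule gsum_reindex[OF bN]) (use deg0_part_term_car[OF \<phi>x] in \<open>auto simp: F_def\<close>)
  also have "\<dots> = gsum N (\<lambda>j. \<chi> (F x j)) A"
  proof (rule gsum_cong[OF bN refl])
    fix j
    have "F (\<phi> x) (j + s) = homog_comp N Ng (j + s) (\<chi> (f (homog_comp M Mg j x)))"
      unfolding F_def using shift_M comm homog_comp_car[OF bM grM x] by simp
    also have "\<dots> = \<chi> (F x j)"
      unfolding F_def using homog_comp_shift[OF bN grN bN grN \<chi> \<chi>_deg] hom_car[OF f]
        homog_comp_car[OF bM grM x] by simp
    finally show "F (\<phi> x) (j + s) = \<chi> (F x j)" .
    show "\<chi> (F x j) \<in> bcar N"
      using additive_map_car[OF bN bN \<chi>] deg0_part_term_car[OF x] unfolding F_def by blast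
  qed
  also have "\<dots> = \<chi> (deg0_part M Mg N Ng f x)"
    unfolding deg0_part_def A_def F_def
    by (rule additive_map_gsum[OF bN bN \<chi>, symmetric]) (rule deg0_part_term_car[OF x])
  finally show ?thesis .
qed

lemma deg0_part_hom:
  assumes ga: "graded_algebra alg Ag"
  shows "bimod_hom M N (deg0_part M Mg N Ng f)"
proof -
  have "(\<forall>x\<in>bcar M. deg0_part M Mg N Ng f (blact M a x) = blact N a (deg0_part M Mg N Ng f x))
    \<and> (\<forall>x\<in>bcar M. deg0_part M Mg N Ng f (bract M x a) = bract N (deg0_part M Mg N Ng f x) a)"
    for a using ga
  proof (induction a rule: graded_algebra_induct)
    case zero
    then show ?case using deg0_part_zero deg0_part_car bm_simps[OF bM] bm_simps[OF bN] by simp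
  next
    case (add a b)
    then show ?case
      using deg0_part_add deg0_part_car bm_simps[OF bM] bm_simps[OF bN] bm_lact_addr[OF bM]
        bm_lact_addr[OF bN] bm_ract_addr[OF bM] bm_ract_addr[OF bN] by simp
  next
    case (homog i a)
    have lact: "blact M a y \<in> Mg (j + int i)" if "y \<in> Mg j" for j y
      using graded_bimodD(5)[OF grM homog that] by (simp add: add.commute)
    have lact': "blact N a y \<in> Ng (j + int i)" if "y \<in> Ng j" for j y
      using graded_bimodD(5)[OF grN homog that] by (simp add: add.commute)
    show ?case
      using deg0_part_shift[OF lact_additive[OF bM] lact lact_additive[OF bN] lact' hom_lact[OF f]]
        deg0_part_shift[OF ract_additive[OF bM] graded_bimodD(6)[OF grM homog]
          ract_additive[OF bN] graded_bimodD(6)[OF grN homog] hom_ract[OF f]]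
      by blast
  qed
  then show ?thesis unfolding bimod_hom_def using deg0_part_car deg0_part_add by blast
qed

lemma deg0_part_graded: "graded_map Mg Ng (deg0_part M Mg N Ng f)"
  unfolding graded_map_def
proof (intro allI subsetI)
  fix j z assume "z \<in> deg0_part M Mg N Ng f ` Mg j"
  then obtain x where x: "x \<in> Mg j" "z = deg0_part M Mg N Ng f x" by auto
  have xM: "x \<in> bcar M" using graded_bimodD(1)[OF grM x(1)] .
  have "homog_supp M Mg x \<subseteq> {j}"
    unfolding homog_supp_def using homog_comp_homog[OF bM grM x(1)] by auto
  then have "z = gsum N (\<lambda>l. homog_comp N Ng l (f (homog_comp M Mg l x))) {j}"
    using deg0_part_eq_gsum[OF xM] x(2) by simp
  also have "\<dots> = homog_comp N Ng j (f (homog_comp M Mg j x))"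
    using gsum_singleton[OF bN, of "\<lambda>l. homog_comp N Ng l (f (homog_comp M Mg l x))" j]
      deg0_part_term_car[OF xM] by simp
  finally show "z \<in> Ng j"
    using homog_comp_in[OF bN grN hom_car[OF f homog_comp_car[OF bM grM xM]]] by simp
qed

end

lemma deg0_part_of_graded:
  assumes bM: "bimodule alg M" and grM: "graded_bimod Ag M Mg"
    and bN: "bimodule alg N" and grN: "graded_bimod Ag N Ng"
    and h: "bimod_hom M N h" and gh: "graded_map Mg Ng h" and x: "x \<in> bcar M"
  shows "deg0_part M Mg N Ng h x = h x"
proof -
  define S where "S = homog_supp M Mg x"
  note comp_car = homog_comp_car[OF bM grM x]
  have "deg0_part M Mg N Ng h x = gsum N (\<lambda>j. homog_comp N Ng j (h (homog_comp M Mg j x))) S"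
    unfolding deg0_part_def S_def ..
  also have "\<dots> = gsum N (\<lambda>j. h (homog_comp M Mg j x)) S"
  proof (rule gsum_cong[OF bN refl])
    fix j
    show "h (homog_comp M Mg j x) \<in> bcar N" using hom_car[OF h comp_car] .
    show "homog_comp N Ng j (h (homog_comp M Mg j x)) = h (homog_comp M Mg j x)"
      using homog_comp_hom[OF bM grM bN grN h gh comp_car]
        homog_comp_homog[OF bM grM homog_comp_in[OF bM grM x]] by simp
  qed
  also have "\<dots> = h (gsum M (\<lambda>j. homog_comp M Mg j x) S)"
    by (rule additive_map_gsum[OF bM bN hom_additive[OF h], symmetric]) (rule comp_car)
  also have "\<dots> = h x"
    using homog_comp_sum[OF bM grM x finite_homog_supp[OF bM grM x]] unfolding S_def by simp
  finally show ?thesis .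
qed

lemma deg0_part_comp_left:
  assumes bM: "bimodule alg M" and grM: "graded_bimod Ag M Mg"
    and bN: "bimodule alg N" and grN: "graded_bimod Ag N Ng"
    and bK: "bimodule alg K" and grK: "graded_bimod Ag K Kg"
    and f: "bimod_hom M N f" and g: "bimod_hom N K g" and gg: "graded_map Ng Kg g"
    and x: "x \<in> bcar M"
  shows "g (deg0_part M Mg N Ng f x) = deg0_part M Mg K Kg (\<lambda>y. g (f y)) x"
proof -
  note term_car = deg0_part_term_car[OF bM grM bN grN f x]
  have "g (deg0_part M Mg N Ng f x)
      = gsum K (\<lambda>j. g (homog_comp N Ng j (f (homog_comp M Mg j x)))) (homog_supp M Mg x)"
    unfolding deg0_part_def by (rule additive_map_gsum[OF bN bK hom_additive[OF g]]) (rule term_car)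
  also have "\<dots> = deg0_part M Mg K Kg (\<lambda>y. g (f y)) x"
    unfolding deg0_part_def
    by (rule gsum_cong[OF bK refl]) (use homog_comp_hom[OF bN grN bK grK g gg] hom_car[OF g]
        hom_car[OF f] homog_comp_car[OF bM grM x] homog_comp_car[OF bK grK] term_car in auto)
  finally show ?thesis .
qed

lemma deg0_part_comp_right:
  assumes bM: "bimodule alg M" and grM: "graded_bimod Ag M Mg"
    and bN: "bimodule alg N" and grN: "graded_bimod Ag N Ng"
    and bK: "bimodule alg K" and grK: "graded_bimod Ag K Kg"
    and f: "bimod_hom M N f" and k: "bimod_hom K M k" and gk: "graded_map Kg Mg k"
    and x: "x \<in> bcar K"
  shows "deg0_part M Mg N Ng f (k x) = deg0_part K Kg N Ng (\<lambda>y. f (k y)) x"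
proof -
  define B where "B = homog_supp K Kg x \<union> homog_supp M Mg (k x)"
  have kx: "k x \<in> bcar M" using hom_car[OF k x] .
  have B: "finite B"
    unfolding B_def using finite_homog_supp[OF bK grK x] finite_homog_supp[OF bM grM kx] by simp
  have "deg0_part M Mg N Ng f (k x)
      = gsum N (\<lambda>j. homog_comp N Ng j (f (homog_comp M Mg j (k x)))) B"
    by (rule deg0_part_eq_gsum[OF bM grM bN grN f kx B]) (auto simp: B_def)
  also have "\<dots> = gsum N (\<lambda>j. homog_comp N Ng j (f (k (homog_comp K Kg j x)))) B"
    by (rule gsum_cong[OF bN refl]) (use homog_comp_hom[OF bK grK bM grM k gk x]
        deg0_part_term_car[OF bK grK bN grN hom_comp[OF k f] x] in auto)
  also have "\<dots> = deg0_part K Kg N Ng (\<lambda>y. f (k y)) x"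
    by (rule deg0_part_eq_gsum[OF bK grK bN grN hom_comp[OF k f] x B, symmetric]) (auto simp: B_def)
  finally show ?thesis .
qed

lemma lsum_reg_bimod: "lsum reg_bimod (map f [-N..N]) = sum f {-N..N}"
proof -
  have "lsum reg_bimod xs = sum_list xs" for xs :: "'a::ring_1 list"
    by (induction xs) (simp_all add: lsum_def reg_bimod_def)
  then show ?thesis by (simp add: sum_list_distinct_conv_sum_set)
qed

lemma sum_int_interval_nonneg:
  fixes f :: "int \<Rightarrow> 'a::comm_monoid_add"
  assumes neg: "\<And>j. j < 0 \<Longrightarrow> f j = 0" and N: "0 \<le> N"
  shows "sum f {-N..N} = (\<Sum>i<Suc (nat N). f (int i))"
proof -
  have "sum f {-N..N} = sum f {0..N}"
    by (rule sum.mono_neutral_right) (use neg in auto)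
  also have "{0..N} = int ` {..<Suc (nat N)}"
    using N by (auto simp: image_iff intro!: bexI[of _ "nat _"])
  also have "sum f \<dots> = (\<Sum>i<Suc (nat N). f (int i))" by (simp add: sum.reindex)
  finally show ?thesis .
qed

lemma int_grading_decomp_exists:
  assumes ga: "graded_algebra alg Ag"
  shows "\<exists>N f. (\<forall>j. f j \<in> int_grading Ag j) \<and> x = lsum reg_bimod (map f [-N..N])"
proof -
  obtain n g where g: "\<And>i. g i \<in> Ag i" "x = (\<Sum>i<n. g i)"
    using graded_algebra_decomp[OF ga] by blast
  define f where "f j = (if 0 \<le> j \<and> j < int n then g (nat j) else 0)" for j
  have "f j \<in> int_grading Ag j" for j
    using g(1) graded_algebraD(1)[OF ga] unfolding f_def int_grading_def by auto
  moreover have "lsum reg_bimod (map f [-int n..int n]) = x"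
    using g(2) by (simp add: lsum_reg_bimod sum_int_interval_nonneg f_def)
  ultimately show ?thesis by metis
qed

lemma int_grading_decomp_unique:
  assumes ga: "graded_algebra alg Ag" and f: "\<forall>j. f j \<in> int_grading Ag j"
    and zero: "lsum reg_bimod (map f [-N..N]) = bzero reg_bimod" and j: "j \<in> {-N..N}"
  shows "f j = bzero reg_bimod"
proof -
  have neg: "f j = 0" if "j < 0" for j
    using f[rule_format, of j] that unfolding int_grading_def by simp
  have "\<forall>i. f (int i) \<in> Ag i"
  proof
    show "f (int i) \<in> Ag i" for i using f[rule_format, of "int i"] unfolding int_grading_def by simp
  qed
  moreover have "(\<Sum>i<Suc (nat N). f (int i)) = 0"
  proof -
    have "sum f {-N..N} = 0" using zero unfolding lsum_reg_bimod by (simp add: reg_bimod_def)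
    then show ?thesis using sum_int_interval_nonneg[of f N, OF neg] j by simp
  qed
  ultimately have "f (int i) = 0" if "i < Suc (nat N)" for i
    using graded_algebraD(5)[OF ga, of "\<lambda>i. f (int i)" "Suc (nat N)" i] that by simp
  moreover have "nat j < Suc (nat N)" using j by auto
  ultimately show ?thesis
    using neg[of j] unfolding reg_bimod_def by (cases "j < 0") (auto, metis nat_0_le not_less)
qed

lemma reg_bimod_graded:
  assumes ga: "graded_algebra alg Ag"
  shows "graded_bimod Ag reg_bimod (int_grading Ag)"
proof -
  note A = graded_algebraD[OF ga]
  have closed: "\<forall>j. int_grading Ag j \<subseteq> bcar reg_bimod \<and> bzero reg_bimod \<in> int_grading Ag j
      \<and> (\<forall>x\<in>int_grading Ag j. \<forall>y\<in>int_grading Ag j. badd reg_bimod x y \<in> int_grading Ag j)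
      \<and> (\<forall>x\<in>int_grading Ag j. bneg reg_bimod x \<in> int_grading Ag j)"
    using A(1-3) by (simp add: reg_bimod_def int_grading_def)
  have actions: "blact reg_bimod a x \<in> int_grading Ag (int i + j)
      \<and> bract reg_bimod x a \<in> int_grading Ag (j + int i)"
    if a: "a \<in> Ag i" and x: "x \<in> int_grading Ag j" for i j a x
  proof (cases "0 \<le> j")
    case True
    then have "a * x \<in> Ag (i + nat j)" "x * a \<in> Ag (nat j + i)"
      using A(4) a x unfolding int_grading_def by auto
    moreover have "nat (int i + j) = i + nat j" "nat (j + int i) = nat j + i" using True by auto
    ultimately show ?thesis using True unfolding int_grading_def reg_bimod_def by simp
  next
    case False
    then show ?thesis using x A(1) unfolding int_grading_def reg_bimod_def by simp
  qed
  show ?thesis unfolding graded_bimod_def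
    using closed actions int_grading_decomp_exists[OF ga] int_grading_decomp_unique[OF ga] by blast
qed

lemma graded_resolutionD:
  assumes "graded_resolution Ag P d eps Pg"
  shows "graded_bimod Ag (P n) (Pg n)" "graded_map (Pg (Suc n)) (Pg n) (d n)"
    "graded_map (Pg 0) (int_grading Ag) eps"
  using assms unfolding graded_resolution_def by simp_all

lemma graded_chain_retraction:
  fixes alg :: "'k::field \<Rightarrow> 'a::ring_1"
    and P :: "nat \<Rightarrow> ('a, 'm) bimod" and d :: "nat \<Rightarrow> 'm \<Rightarrow> 'm" and eps :: "'m \<Rightarrow> 'a"
    and P' :: "nat \<Rightarrow> ('a, 'n) bimod" and d' :: "nat \<Rightarrow> 'n \<Rightarrow> 'n" and eps' :: "'n \<Rightarrow> 'a"
    and psi :: "nat \<Rightarrow> 'm \<Rightarrow> 'n" and F :: "nat \<Rightarrow> 'n \<Rightarrow> 'm"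
  assumes alg: "k_algebra alg" and ga: "graded_algebra alg Ag"
    and resP: "bimod_resolution alg P d eps" and resP': "bimod_resolution alg P' d' eps'"
    and grP: "graded_resolution Ag P d eps Pg" and grP': "graded_resolution Ag P' d' eps' P'g"
    and psi: "chain_map_lifting_id P d eps P' d' eps' psi"
    and gpsi: "\<And>n. graded_map (Pg n) (P'g n) (psi n)"
    and F: "chain_map_lifting_id P' d' eps' P d eps F"
    and F_psi: "\<And>n x. x \<in> bcar (P n) \<Longrightarrow> F n (psi n x) = x"
  defines "G n \<equiv> deg0_part (P' n) (P'g n) (P n) (Pg n) (F n)"
  shows "chain_map_lifting_id P' d' eps' P d eps G \<and> (\<forall>n. \<forall>x\<in>bcar (P n). G n (psi n x) = x)
    \<and> (\<forall>n. graded_map (P'g n) (Pg n) (G n))"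
proof -
  note P = bimod_resolutionD[OF resP] and P' = bimod_resolutionD[OF resP']
    and gP = graded_resolutionD[OF grP] and gP' = graded_resolutionD[OF grP']
    and psi = chain_map_lifting_idD[OF psi] and F = chain_map_lifting_idD[OF F]
  note bA = reg_bimodule[OF alg] and gA = reg_bimod_graded[OF ga]
  have chain: "d n (G (Suc n) x) = G n (d' n x)" if x: "x \<in> bcar (P' (Suc n))" for n x
  proof -
    have "d n (G (Suc n) x)
        = deg0_part (P' (Suc n)) (P'g (Suc n)) (P n) (Pg n) (\<lambda>y. d n (F (Suc n) y)) x"
      unfolding G_def
      using deg0_part_comp_left[OF P'(1) gP'(1) P(1) gP(1) P(1) gP(1) F(1) P(2) gP(2) x] .
    also have "\<dots> = deg0_part (P' (Suc n)) (P'g (Suc n)) (P n) (Pg n) (\<lambda>y. F n (d' n y)) x"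
      by (rule deg0_part_cong[OF P'(1) gP'(1) x F(2)])
    also have "\<dots> = G n (d' n x)"
      unfolding G_def
      using deg0_part_comp_right[OF P'(1) gP'(1) P(1) gP(1) P'(1) gP'(1) F(1) P'(2) gP'(2) x] ..
    finally show ?thesis .
  qed
  have augmentation: "eps (G 0 x) = eps' x" if x: "x \<in> bcar (P' 0)" for x
  proof -
    have "eps (G 0 x) = deg0_part (P' 0) (P'g 0) reg_bimod (int_grading Ag) (\<lambda>y. eps (F 0 y)) x"
      unfolding G_def
      using deg0_part_comp_left[OF P'(1) gP'(1) P(1) gP(1) bA gA F(1) P(3) gP(3) x] .
    also have "\<dots> = deg0_part (P' 0) (P'g 0) reg_bimod (int_grading Ag) eps' x"
      by (rule deg0_part_cong[OF P'(1) gP'(1) x F(3)])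
    also have "\<dots> = eps' x" using deg0_part_of_graded[OF P'(1) gP'(1) bA gA P'(3) gP'(3) x] .
    finally show ?thesis .
  qed
  have retraction: "G n (psi n x) = x" if x: "x \<in> bcar (P n)" for n x
  proof -
    have "G n (psi n x) = deg0_part (P n) (Pg n) (P n) (Pg n) (\<lambda>y. F n (psi n y)) x"
      unfolding G_def
      using deg0_part_comp_right[OF P'(1) gP'(1) P(1) gP(1) P(1) gP(1) F(1) psi(1) gpsi x] .
    also have "\<dots> = deg0_part (P n) (Pg n) (P n) (Pg n) (\<lambda>y. y) x"
      by (rule deg0_part_cong[OF P(1) gP(1) x F_psi])
    also have "\<dots> = x"
      using deg0_part_of_graded[OF P(1) gP(1) P(1) gP(1) hom_id _ x]
      unfolding graded_map_def by simp
    finally show ?thesis .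
  qed
  have "bimod_hom (P' n) (P n) (G n)" for n
    unfolding G_def by (rule deg0_part_hom[OF P'(1) gP'(1) P(1) gP(1) F(1) ga])
  moreover have "graded_map (P'g n) (Pg n) (G n)" for n
    unfolding G_def by (rule deg0_part_graded[OF P'(1) gP'(1) P(1) gP(1) F(1)])
  ultimately show ?thesis
    unfolding chain_map_lifting_id_def by (simp add: chain augmentation retraction)
qed

theorem lemma9p1:
  fixes alg :: "'k::field \<Rightarrow> 'a::ring_1"
    and P :: "nat \<Rightarrow> ('a, 'm) bimod" and d :: "nat \<Rightarrow> 'm \<Rightarrow> 'm" and eps :: "'m \<Rightarrow> 'a"
    and P' :: "nat \<Rightarrow> ('a, 'n) bimod" and d' :: "nat \<Rightarrow> 'n \<Rightarrow> 'n" and eps' :: "'n \<Rightarrow> 'a"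
    and psi :: "nat \<Rightarrow> 'm \<Rightarrow> 'n"
  assumes alg: "k_algebra alg"
    and resP: "bimod_resolution alg P d eps"
    and resP': "bimod_resolution alg P' d' eps'"
    and psi: "chain_map_lifting_id P d eps P' d' eps' psi"
    and inj: "\<forall>n. inj_on (psi n) (bcar (P n))"
    and proj: "\<forall>n. projective_bimod alg (quot_bimod (P' n) (psi n ` bcar (P n)))"
  shows "(\<exists>psi'. chain_map_lifting_id P' d' eps' P d eps psi'
                \<and> (\<forall>n. \<forall>x\<in>bcar (P n). psi' n (psi n x) = x))
    \<and> (\<forall>Ag Pg P'g. graded_algebra alg Ag
            \<and> graded_resolution Ag P d eps Pg \<and> graded_resolution Ag P' d' eps' P'g
            \<and> (\<forall>n. graded_map (Pg n) (P'g n) (psi n))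
          \<longrightarrow> (\<exists>psi'. chain_map_lifting_id P' d' eps' P d eps psi'
                \<and> (\<forall>n. \<forall>x\<in>bcar (P n). psi' n (psi n x) = x)
                \<and> (\<forall>n. graded_map (P'g n) (Pg n) (psi' n))))"
proof -
  obtain F where F: "chain_map_lifting_id P' d' eps' P d eps F"
    and F_psi: "\<forall>n. \<forall>x\<in>bcar (P n). F n (psi n x) = x"
    using chain_retraction_exists[OF alg resP resP' psi inj[rule_format] proj[rule_format]] by blast
  have "\<exists>psi'. chain_map_lifting_id P' d' eps' P d eps psi'
                \<and> (\<forall>n. \<forall>x\<in>bcar (P n). psi' n (psi n x) = x)
                \<and> (\<forall>n. graded_map (P'g n) (Pg n) (psi' n))"
    if "graded_algebra alg Ag" "graded_resolution Ag P d eps Pg"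
      "graded_resolution Ag P' d' eps' P'g" "\<forall>n. graded_map (Pg n) (P'g n) (psi n)" for Ag Pg P'g
  proof (rule exI)
    show "chain_map_lifting_id P' d' eps' P d eps (\<lambda>n. deg0_part (P' n) (P'g n) (P n) (Pg n) (F n))
      \<and> (\<forall>n. \<forall>x\<in>bcar (P n). deg0_part (P' n) (P'g n) (P n) (Pg n) (F n) (psi n x) = x)
      \<and> (\<forall>n. graded_map (P'g n) (Pg n) (deg0_part (P' n) (P'g n) (P n) (Pg n) (F n)))"
      using graded_chain_retraction[OF alg that(1) resP resP' that(2,3) psi _ F] that(4) F_psi
      by blast
  qed
  then show ?thesis using F F_psi by blast
qed

end
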